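(* Let $\nu_0=0$, $s>0$, $\gamma\ge0$, $u>0$, and let $g_\infty=\lim_{r\to\infty}g_r$ and $y_\infty(y_0)=\lim_{t\to\infty}y(t;y_0)$. Then $g_\infty(y_\infty(1))=1$, and for all $y_0\in[0,1)$: (i) if $0<u<s$, or $u=s<\gamma$, then $g_\infty(y_\infty(y_0))=0$; (ii) if $u>\check u$, or $s\ge\gamma$ and $s\le u\le\check u$, then $g_\infty(y_\infty(y_0))=1$; (iii) if $s<\gamma$ and $s<u\le\check u$, then $g_\infty(y_\infty(y_0))=0$ if $y_0\le\bar y_3$, and $g_\infty(y_\infty(y_0))=1$ if $y_0>\bar y_3$.
   Context: $y(t;y_0)$ solves $\dot y=-y(1-y)[s+\gamma(1-y)]+u(1-y)$, $y(0)=y_0$. For $\gamma>0$: $\check u=\frac1\gamma\big(\frac{s+\gamma}2\big)^2$, $\sigma=(1+s/\gamma)^2-4u/\gamma$, and, when $\sigma\ge0$, $\bar y_3=\frac12(1+\frac s\gamma+\sqrt\sigma)$. For $\gamma=0$, set $\check u=+\infty$. Embedded ASG process $(a_r)_{r\ge0}$: a random finite rooted tree started from a single unmarked root. Independently at each leaf: at rate $s$, two children (left, right) are attached; at rate $\gamma$, three children (left, middle, right) are attached; at rate $u$, one child is attached and the leaf is marked $\times$. Typing: vertex types propagate from the leaf types towards the root. A $\times$-marked vertex has type 1; an outdegree-2 vertex has type 1 iff both children have type 1; an outdegree-3 vertex has type 0 iff its left child has type 0 or its middle and right children both have type 0. Ancestral leaf $\lambda_v$: a leaf is its own ancestral leaf.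 For outdegree 2, take $\lambda$ of the right child if it has type 0, else $\lambda$ of the left child. For outdegree 3, take $\lambda$ of the right child if the middle and right children both have type 0, else $\lambda$ of the left child. For outdegree 1, take $\lambda$ of the child. $g_r(y_0)$ is the probability that the ancestral leaf of the root of $a_r$ has type 1 when the leaves are typed independently, each with type 1 with probability $y_0$. *)

theory Defs
  imports "HOL-Analysis.Analysis" "HOL-Library.Extended_Real"
begin

definition drift :: "real \<Rightarrow> real \<Rightarrow> real \<Rightarrow> real \<Rightarrow> real" where
  "drift s \<gamma> u y = - y * (1 - y) * (s + \<gamma> * (1 - y)) + u * (1 - y)"

definition ucheck :: "real \<Rightarrow> real \<Rightarrow> ereal" where
  "ucheck s \<gamma> = (if \<gamma> = 0 then \<infinity> else ereal ((1 / \<gamma>) * ((s + \<gamma>) / 2)^2))"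

definition sigma :: "real \<Rightarrow> real \<Rightarrow> real \<Rightarrow> real" where
  "sigma s \<gamma> u = (1 + s / \<gamma>)^2 - 4 * u / \<gamma>"

definition ybar3 :: "real \<Rightarrow> real \<Rightarrow> real \<Rightarrow> real" where
  "ybar3 s \<gamma> u = (1 + s / \<gamma> + sqrt (sigma s \<gamma> u)) / 2"

text \<open>Finite rooted ordered trees; leaves carry a label of type 'a
  (unit for bare shapes, bool for typed leaves, True = type 1).
  Br2 l r: outdegree-2 vertex (rate s); Br3 l m r: outdegree-3 vertex (rate gamma);
  Mk c: vertex marked x with its single child (rate u).\<close>
datatype 'a asg = Lf 'a | Br2 "'a asg" "'a asg" | Br3 "'a asg" "'a asg" "'a asg" | Mk "'a asg"

text \<open>Law of the embedded ASG process a_r started from a single unmarked root: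
  asg_prob s gamma u T r = P(a_r = T), via the first-event decomposition at the root
  (holding time Exp(s+gamma+u); after the event the children evolve independently
  as copies of the process for the remaining time).\<close>
primrec asg_prob :: "real \<Rightarrow> real \<Rightarrow> real \<Rightarrow> 'a asg \<Rightarrow> real \<Rightarrow> real" where
  "asg_prob s \<gamma> u (Lf x) r = exp (- (s + \<gamma> + u) * r)"
| "asg_prob s \<gamma> u (Br2 a b) r =
     integral {0..r} (\<lambda>\<tau>. s * exp (- (s + \<gamma> + u) * \<tau>)
        * asg_prob s \<gamma> u a (r - \<tau>) * asg_prob s \<gamma> u b (r - \<tau>))"
| "asg_prob s \<gamma> u (Br3 a b c) r =
     integral {0..r} (\<lambda>\<tau>. \<gamma> * exp (- (s + \<gamma> + u) * \<tau>)
        * asg_prob s \<gamma> u a (r - \<tau>) * asg_prob s \<gamma> u b (r - \<tau>) * asg_prob s \<gamma> u c (r - \<tau>))"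
| "asg_prob s \<gamma> u (Mk a) r =
     integral {0..r} (\<lambda>\<tau>. u * exp (- (s + \<gamma> + u) * \<tau>) * asg_prob s \<gamma> u a (r - \<tau>))"

primrec vtype :: "bool asg \<Rightarrow> bool" where
  "vtype (Lf b) = b"
| "vtype (Br2 l r) = (vtype l \<and> vtype r)"
| "vtype (Br3 l m r) = (\<not> (\<not> vtype l \<or> (\<not> vtype m \<and> \<not> vtype r)))"
| "vtype (Mk c) = True"

primrec anc_type :: "bool asg \<Rightarrow> bool" where
  "anc_type (Lf b) = b"
| "anc_type (Br2 l r) = (if \<not> vtype r then anc_type r else anc_type l)"
| "anc_type (Br3 l m r) = (if \<not> vtype m \<and> \<not> vtype r then anc_type r else anc_type l)"
| "anc_type (Mk c) = anc_type c"

primrec leaves :: "'a asg \<Rightarrow> 'a list" where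
  "leaves (Lf x) = [x]"
| "leaves (Br2 l r) = leaves l @ leaves r"
| "leaves (Br3 l m r) = leaves l @ leaves m @ leaves r"
| "leaves (Mk c) = leaves c"

definition leaf_weight :: "real \<Rightarrow> bool asg \<Rightarrow> real" where
  "leaf_weight y0 T = prod_list (map (\<lambda>b. if b then y0 else 1 - y0) (leaves T))"

text \<open>g_r(y0) = P(ancestral leaf of the root of a_r has type 1).\<close>
definition asg_g :: "real \<Rightarrow> real \<Rightarrow> real \<Rightarrow> real \<Rightarrow> real \<Rightarrow> real" where
  "asg_g s \<gamma> u r y0 =
     infsum (\<lambda>T. asg_prob s \<gamma> u (map_asg (\<lambda>_. ()) T) r * leaf_weight y0 T) {T. anc_type T}"

end

theory Submission
  imports Defs
begin

text \<open>
  Conditioning on the first event at the root turns the law of the embedded ASG into Volterra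
  integral equations. Restricted to trees of height at most n, the total mass M, the mass V of
  trees whose root has type 1, and the mass A of trees whose ancestral leaf has type 1 satisfy
  such equations with the nonlinearities of the typing rules. If all leaves have type 1, then
  A = M, and M tends to 1 as n grows, so g_r(1) = 1. At an equilibrium L < 1 of the ODE,
  comparison in the integral equations gives V \<le> L and A \<le> L exp (- (1 - L)(s + \<gamma>(1 - L)) t),
  so g_r(L) tends to 0.

  An integrating factor shows that a solution never
  crosses an equilibrium, so it moves monotonically to the nearest equilibrium in the direction
  of the drift (1 - y)(\<gamma> y^2 - (s + \<gamma>) y + u). The sign pattern of this drift in the three
  parameter regimes identifies that equilibrium.
\<close>

section \<open>Integrals against an exponential kernel\<close>

lemma integral_reflect_Icc_0:
  fixes h :: "real \<Rightarrow> real"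
  shows "integral {0..r} (\<lambda>\<tau>. h (r - \<tau>)) = integral {0..r} h"
proof -
  have "integral {0..r} (\<lambda>\<tau>. h (r - \<tau>)) = integral {-r..0} (\<lambda>x. h (x + r))"
    using Henstock_Kurzweil_Integration.integral_reflect_real[of 0 "-r" "\<lambda>x. h (x + r)"]
    by (simp add: algebra_simps)
  also have "\<dots> = integral {0 - r..r - r} (\<lambda>x. h (x + r))" by simp
  also have "\<dots> = integral {0..r} h" by (rule integral_shift_real_ivl)
  finally show ?thesis .
qed

lemma continuous_on_reflect_Icc_0:
  fixes h :: "real \<Rightarrow> real"
  assumes "\<And>b. continuous_on {0..b} h"
  shows "continuous_on {0..r} (\<lambda>\<tau>. h (r - \<tau>))"
  by (rule continuous_on_compose2[OF assms[of r]]) (auto intro: continuous_intros)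

lemma continuous_on_exp_convolution:
  fixes h :: "real \<Rightarrow> real"
  assumes "\<And>b. continuous_on {0..b} h"
  shows "continuous_on {0..b} (\<lambda>r. integral {0..r} (\<lambda>\<tau>. exp (- c * \<tau>) * h (r - \<tau>)))"
proof -
  have "integral {0..r} (\<lambda>\<tau>. exp (- c * \<tau>) * h (r - \<tau>)) =
        exp (- c * r) * integral {0..r} (\<lambda>\<sigma>. exp (c * \<sigma>) * h \<sigma>)" for r
  proof -
    have "(\<lambda>\<tau>. exp (- c * \<tau>) * h (r - \<tau>)) = (\<lambda>\<tau>. exp (- c * r) * (exp (c * (r - \<tau>)) * h (r - \<tau>)))"
      by (auto simp: fun_eq_iff exp_add[symmetric] algebra_simps)
    then show ?thesis using integral_reflect_Icc_0[of r "\<lambda>\<sigma>. exp (c * \<sigma>) * h \<sigma>"] by simp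
  qed
  moreover have "continuous_on {0..b} (\<lambda>r. integral {0..r} (\<lambda>\<sigma>. exp (c * \<sigma>) * h \<sigma>))"
    by (rule indefinite_integral_continuous_1, rule integrable_continuous_interval)
       (intro continuous_intros assms)
  ultimately show ?thesis by (simp add: continuous_intros)
qed

text \<open>No integrability hypothesis is needed: a non-integrable function has integral 0.\<close>
lemma integral_nonneg_pointwise:
  fixes f :: "real \<Rightarrow> real"
  assumes "\<And>x. x \<in> S \<Longrightarrow> 0 \<le> f x"
  shows "0 \<le> integral S f"
  using assms integral_nonneg not_integrable_integral by (metis order_refl)

lemma integral_mono_continuous_on:
  fixes f g :: "real \<Rightarrow> real"
  assumes "continuous_on {a..b} f" "continuous_on {a..b} g" "\<And>x. x \<in> {a..b} \<Longrightarrow> f x \<le> g x"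
  shows "integral {a..b} f \<le> integral {a..b} g"
  using assms by (intro integral_le integrable_continuous_interval) auto

lemma integral_exp_neg_Icc_0:
  fixes c r :: real
  assumes c: "0 < c" and r: "0 \<le> r"
  shows "integral {0..r} (\<lambda>\<tau>. exp (- c * \<tau>)) = (1 - exp (- c * r)) / c"
proof -
  have "((\<lambda>\<tau>. exp (- c * \<tau>)) has_integral (- exp (- c * r) / c - (- exp (- c * 0) / c))) {0..r}"
  proof (rule fundamental_theorem_of_calculus[OF r])
    fix x assume "x \<in> {0..r}"
    have "((\<lambda>\<tau>. - exp (- c * \<tau>) / c) has_real_derivative exp (- c * x)) (at x within {0..r})"
      using c by (auto intro!: derivative_eq_intros simp: field_simps)
    then show "((\<lambda>\<tau>. - exp (- c * \<tau>) / c) has_vector_derivative exp (- c * x)) (at x within {0..r})"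
      by (simp add: has_real_derivative_iff_has_vector_derivative)
  qed
  then show ?thesis using c by (simp add: integral_unique field_simps)
qed

lemma integral_power_fact_Icc_0:
  fixes C r :: real
  assumes r: "0 \<le> r"
  shows "integral {0..r} (\<lambda>\<tau>. C * (C * (r - \<tau>)) ^ n / fact n) = (C * r) ^ Suc n / fact (Suc n)"
proof -
  define F where "F \<sigma> = C ^ Suc n * \<sigma> ^ Suc n / fact (Suc n)" for \<sigma> :: real
  have "((\<lambda>\<sigma>. C * (C * \<sigma>) ^ n / fact n) has_integral (F r - F 0)) {0..r}"
  proof (rule fundamental_theorem_of_calculus[OF r])
    fix x assume "x \<in> {0..r}"
    have "((\<lambda>\<sigma>. \<sigma> ^ Suc n) has_real_derivative real (Suc n) * x ^ n) (at x within {0..r})"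
      using DERIV_pow[of "Suc n" x] has_field_derivative_at_within by simp
    then have "(F has_real_derivative C ^ Suc n * (real (Suc n) * x ^ n) / fact (Suc n)) (at x within {0..r})"
      unfolding F_def by (intro DERIV_cdivide DERIV_cmult)
    moreover have "C ^ Suc n * (real (Suc n) * x ^ n) / fact (Suc n) = C * (C * x) ^ n / fact n"
      by (simp add: fact_Suc power_mult_distrib field_simps del: of_nat_Suc)
    ultimately have "(F has_real_derivative C * (C * x) ^ n / fact n) (at x within {0..r})"
      by (simp only:)
    then show "(F has_vector_derivative C * (C * x) ^ n / fact n) (at x within {0..r})"
      by (simp only: has_real_derivative_iff_has_vector_derivative)
  qed
  then have "integral {0..r} (\<lambda>\<sigma>. C * (C * \<sigma>) ^ n / fact n) = F r - F 0"
    by (rule integral_unique)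
  then show ?thesis
    using integral_reflect_Icc_0[of r "\<lambda>\<sigma>. C * (C * \<sigma>) ^ n / fact n"]
    by (simp add: F_def power_mult_distrib)
qed

section \<open>Typed trees of bounded height\<close>

definition asg_grow :: "bool asg set \<Rightarrow> bool asg set" where
  "asg_grow A = {Lf True, Lf False} \<union> (\<lambda>(a, b). Br2 a b) ` (A \<times> A)
      \<union> (\<lambda>(a, b, c). Br3 a b c) ` (A \<times> A \<times> A) \<union> Mk ` A"

fun asg_level :: "nat \<Rightarrow> bool asg set" where
  "asg_level 0 = {Lf True, Lf False}"
| "asg_level (Suc n) = asg_grow (asg_level n)"

lemma asg_grow_mono: "A \<subseteq> B \<Longrightarrow> asg_grow A \<subseteq> asg_grow B"
  unfolding asg_grow_def by (intro Un_mono image_mono Sigma_mono order_refl) auto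

lemma finite_asg_level: "finite (asg_level n)"
  by (induction n) (auto simp: asg_grow_def)

lemma leaves_in_asg_level: "{Lf True, Lf False} \<subseteq> asg_level n"
  by (cases n) (auto simp: asg_grow_def)

lemma asg_level_mono: "m \<le> n \<Longrightarrow> asg_level m \<subseteq> asg_level n"
proof -
  have "asg_level n \<subseteq> asg_level (Suc n)" for n
  proof (induction n)
    case 0
    then show ?case by (auto simp: asg_grow_def)
  next
    case (Suc n)
    then show ?case by (simp only: asg_level.simps asg_grow_mono)
  qed
  then show "m \<le> n \<Longrightarrow> ?thesis" using lift_Suc_mono_le[of asg_level] by blast
qed

lemma asg_in_level: "\<exists>n. T \<in> asg_level n"
proof (induction T)
  case (Lf x)
  then show ?case by (intro exI[of _ 0]) (cases x, auto)
next
  case (Br2 a b)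
  then obtain na nb where "a \<in> asg_level na" "b \<in> asg_level nb" by blast
  moreover have "asg_level na \<subseteq> asg_level (max na nb)" "asg_level nb \<subseteq> asg_level (max na nb)"
    by (simp_all add: asg_level_mono)
  ultimately have "(a, b) \<in> asg_level (max na nb) \<times> asg_level (max na nb)" by blast
  then have "Br2 a b \<in> (\<lambda>(a, b). Br2 a b) ` (asg_level (max na nb) \<times> asg_level (max na nb))"
    by (rule rev_image_eqI) simp
  then show ?case by (intro exI[of _ "Suc (max na nb)"]) (simp only: asg_level.simps asg_grow_def, blast)
next
  case (Br3 a b c)
  then obtain na nb nc where "a \<in> asg_level na" "b \<in> asg_level nb" "c \<in> asg_level nc" by blast
  moreover have "asg_level na \<subseteq> asg_level (max na (max nb nc))"
    "asg_level nb \<subseteq> asg_level (max na (max nb nc))" "asg_level nc \<subseteq> asg_level (max na (max nb nc))"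
    by (simp_all add: asg_level_mono)
  ultimately have "(a, b, c) \<in> asg_level (max na (max nb nc)) \<times> asg_level (max na (max nb nc))
      \<times> asg_level (max na (max nb nc))" by blast
  then have "Br3 a b c \<in> (\<lambda>(a, b, c). Br3 a b c) ` (asg_level (max na (max nb nc))
      \<times> asg_level (max na (max nb nc)) \<times> asg_level (max na (max nb nc)))"
    by (rule rev_image_eqI) simp
  then show ?case
    by (intro exI[of _ "Suc (max na (max nb nc))"]) (simp only: asg_level.simps asg_grow_def, blast)
next
  case (Mk a)
  then obtain na where "a \<in> asg_level na" by blast
  then show ?case by (intro exI[of _ "Suc na"]) (simp only: asg_level.simps asg_grow_def, blast)
qed

lemma finite_subset_asg_level: "finite F \<Longrightarrow> \<exists>n. F \<subseteq> asg_level n"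
proof (induction F rule: finite_induct)
  case (insert x F)
  then obtain n where n: "F \<subseteq> asg_level n" by blast
  obtain m where m: "x \<in> asg_level m" using asg_in_level by blast
  have "F \<subseteq> asg_level (max n m)" using n asg_level_mono[of n "max n m"] by auto
  moreover have "x \<in> asg_level (max n m)" using m asg_level_mono[of m "max n m"] by auto
  ultimately show ?case by blast
qed simp

lemma sum_asg_level_Suc:
  fixes f :: "bool asg \<Rightarrow> 'a :: comm_monoid_add"
  shows "(\<Sum>T\<in>asg_level (Suc n). f T) = f (Lf True) + f (Lf False)
     + (\<Sum>a\<in>asg_level n. \<Sum>b\<in>asg_level n. f (Br2 a b))
     + (\<Sum>a\<in>asg_level n. \<Sum>b\<in>asg_level n. \<Sum>c\<in>asg_level n. f (Br3 a b c))
     + (\<Sum>a\<in>asg_level n. f (Mk a))"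
proof -
  let ?A = "asg_level n"
  let ?L = "{Lf True, Lf False}"
  let ?B2 = "(\<lambda>(a, b). Br2 a b) ` (?A \<times> ?A)"
  let ?B3 = "(\<lambda>(a, b, c). Br3 a b c) ` (?A \<times> ?A \<times> ?A)"
  have fin: "finite ?A" by (rule finite_asg_level)
  have "sum f ?B2 = sum (f \<circ> (\<lambda>(a, b). Br2 a b)) (?A \<times> ?A)"
    by (rule sum.reindex) (auto simp: inj_on_def)
  also have "\<dots> = (\<Sum>a\<in>?A. \<Sum>b\<in>?A. f (Br2 a b))"
    by (simp add: sum.cartesian_product case_prod_beta comp_def)
  finally have B2: "sum f ?B2 = (\<Sum>a\<in>?A. \<Sum>b\<in>?A. f (Br2 a b))" .
  have "sum f ?B3 = sum (f \<circ> (\<lambda>(a, b, c). Br3 a b c)) (?A \<times> ?A \<times> ?A)"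
    by (rule sum.reindex) (auto simp: inj_on_def)
  also have "\<dots> = (\<Sum>a\<in>?A. \<Sum>b\<in>?A. \<Sum>c\<in>?A. f (Br3 a b c))"
    by (simp add: sum.cartesian_product case_prod_beta comp_def)
  finally have B3: "sum f ?B3 = (\<Sum>a\<in>?A. \<Sum>b\<in>?A. \<Sum>c\<in>?A. f (Br3 a b c))" .
  have M: "sum f (Mk ` ?A) = (\<Sum>a\<in>?A. f (Mk a))"
    by (subst sum.reindex) (auto simp: inj_on_def)
  have d: "?L \<inter> ?B2 = {}" "(?L \<union> ?B2) \<inter> ?B3 = {}" "(?L \<union> ?B2 \<union> ?B3) \<inter> Mk ` ?A = {}"
    by auto
  have "(\<Sum>T\<in>asg_level (Suc n). f T) = sum f (?L \<union> ?B2 \<union> ?B3 \<union> Mk ` ?A)"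
    by (simp only: asg_level.simps asg_grow_def)
  also have "\<dots> = sum f ?L + sum f ?B2 + sum f ?B3 + sum f (Mk ` ?A)"
    using fin d by (simp add: sum.union_disjoint add.assoc)
  finally show ?thesis by (simp add: B2 B3 M)
qed

lemma vtype_if_anc_type: "anc_type T \<Longrightarrow> vtype T"
  by (induction T) (auto split: if_splits)

lemma anc_type_Br2: "anc_type (Br2 a b) = (anc_type a \<and> vtype b)"
  using vtype_if_anc_type[of b] by auto

lemma anc_type_Br3: "anc_type (Br3 a b c) = (anc_type a \<and> (vtype b \<or> vtype c))"
  using vtype_if_anc_type[of c] by auto

lemma leaf_weight_simps [simp]:
  "leaf_weight y (Lf x) = (if x then y else 1 - y)"
  "leaf_weight y (Br2 a b) = leaf_weight y a * leaf_weight y b"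
  "leaf_weight y (Br3 a b c) = leaf_weight y a * leaf_weight y b * leaf_weight y c"
  "leaf_weight y (Mk a) = leaf_weight y a"
  by (simp_all add: leaf_weight_def)

lemma leaf_weight_nonneg: "0 \<le> y \<Longrightarrow> y \<le> 1 \<Longrightarrow> 0 \<le> leaf_weight y T"
  by (induction T) auto

lemma leaf_weight_1_if_not_anc_type:
  assumes "\<not> anc_type T"
  shows "leaf_weight 1 T = 0"
proof -
  have "(\<not> vtype T \<longrightarrow> leaf_weight 1 T = 0) \<and> (\<not> anc_type T \<longrightarrow> leaf_weight 1 T = 0)"
    by (induction T) auto
  with assms show ?thesis by blast
qed

section \<open>Integral equations for the embedded ASG\<close>

locale asg_rates =
  fixes s \<gamma> u :: real
  assumes s_pos: "0 < s" and \<gamma>_nonneg: "0 \<le> \<gamma>" and u_pos: "0 < u"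
begin

definition rate :: real where
  "rate = s + \<gamma> + u"

lemma rate_pos: "0 < rate"
  using s_pos \<gamma>_nonneg u_pos by (simp add: rate_def)

lemma integral_exp_rate: "0 \<le> t \<Longrightarrow> integral {0..t} (\<lambda>\<tau>. exp (- rate * \<tau>) * rate) = 1 - exp (- rate * t)"
  using integral_exp_neg_Icc_0[OF rate_pos, of t] rate_pos by simp

definition shape_prob :: "bool asg \<Rightarrow> real \<Rightarrow> real" where
  "shape_prob T r = asg_prob s \<gamma> u (map_asg (\<lambda>_. ()) T) r"

lemma shape_prob_simps:
  "shape_prob (Lf x) r = exp (- rate * r)"
  "shape_prob (Br2 a b) r =
     integral {0..r} (\<lambda>\<tau>. exp (- rate * \<tau>) * (s * shape_prob a (r - \<tau>) * shape_prob b (r - \<tau>)))"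
  "shape_prob (Br3 a b c) r =
     integral {0..r} (\<lambda>\<tau>. exp (- rate * \<tau>) *
       (\<gamma> * shape_prob a (r - \<tau>) * shape_prob b (r - \<tau>) * shape_prob c (r - \<tau>)))"
  "shape_prob (Mk a) r = integral {0..r} (\<lambda>\<tau>. exp (- rate * \<tau>) * (u * shape_prob a (r - \<tau>)))"
  by (simp_all add: shape_prob_def rate_def mult_ac)

lemma continuous_on_shape_prob: "continuous_on {0..b} (shape_prob T)"
proof (induction T arbitrary: b)
  case (Lf x)
  then show ?case by (simp add: shape_prob_simps continuous_intros)
next
  case (Br2 a c)
  show ?case
    using continuous_on_exp_convolution[of "\<lambda>t. s * shape_prob a t * shape_prob c t"]
    by (simp add: shape_prob_simps continuous_intros Br2.IH)
next
  case (Br3 a c d)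
  show ?case
    using continuous_on_exp_convolution[of "\<lambda>t. \<gamma> * shape_prob a t * shape_prob c t * shape_prob d t"]
    by (simp add: shape_prob_simps continuous_intros Br3.IH)
next
  case (Mk a)
  show ?case
    using continuous_on_exp_convolution[of "\<lambda>t. u * shape_prob a t"]
    by (simp add: shape_prob_simps continuous_intros Mk.IH)
qed

lemma shape_prob_nonneg: "0 \<le> r \<Longrightarrow> 0 \<le> shape_prob T r"
proof (induction T arbitrary: r)
  case (Lf x)
  then show ?case by (simp add: shape_prob_simps)
next
  case (Br2 a c)
  have "0 \<le> exp (- rate * x) * (s * shape_prob a (r - x) * shape_prob c (r - x))" if "x \<in> {0..r}" for x
    using that Br2.IH[of "r - x"] s_pos by simp
  then show ?case unfolding shape_prob_simps by (rule integral_nonneg_pointwise)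
next
  case (Br3 a c d)
  have "0 \<le> exp (- rate * x) * (\<gamma> * shape_prob a (r - x) * shape_prob c (r - x) * shape_prob d (r - x))"
    if "x \<in> {0..r}" for x
    using that Br3.IH[of "r - x"] \<gamma>_nonneg by simp
  then show ?case unfolding shape_prob_simps by (rule integral_nonneg_pointwise)
next
  case (Mk a)
  have "0 \<le> exp (- rate * x) * (u * shape_prob a (r - x))" if "x \<in> {0..r}" for x
    using that Mk.IH[of "r - x"] u_pos by simp
  then show ?case unfolding shape_prob_simps by (rule integral_nonneg_pointwise)
qed

definition typed_prob :: "real \<Rightarrow> bool asg \<Rightarrow> real \<Rightarrow> real" where
  "typed_prob y T r = shape_prob T r * leaf_weight y T"

lemma asg_g_eq_infsum: "asg_g s \<gamma> u r y = infsum (\<lambda>T. typed_prob y T r) {T. anc_type T}"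
  by (simp add: asg_g_def typed_prob_def shape_prob_def)

lemma continuous_on_typed_prob: "continuous_on {0..b} (typed_prob y T)"
  unfolding typed_prob_def by (intro continuous_intros continuous_on_shape_prob)

lemma typed_prob_nonneg: "0 \<le> y \<Longrightarrow> y \<le> 1 \<Longrightarrow> 0 \<le> r \<Longrightarrow> 0 \<le> typed_prob y T r"
  unfolding typed_prob_def by (intro mult_nonneg_nonneg shape_prob_nonneg leaf_weight_nonneg)

primrec branch_density :: "real \<Rightarrow> bool asg \<Rightarrow> real \<Rightarrow> real" where
  "branch_density y (Lf x) t = 0"
| "branch_density y (Br2 a b) t = s * (typed_prob y a t * typed_prob y b t)"
| "branch_density y (Br3 a b c) t = \<gamma> * (typed_prob y a t * typed_prob y b t * typed_prob y c t)"
| "branch_density y (Mk a) t = u * typed_prob y a t"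

lemma continuous_on_branch_density: "continuous_on {0..b} (branch_density y T)"
  by (cases T) (simp_all add: continuous_intros continuous_on_typed_prob)

lemma typed_prob_first_event:
  assumes "\<And>x. T \<noteq> Lf x"
  shows "typed_prob y T r = integral {0..r} (\<lambda>\<tau>. exp (- rate * \<tau>) * branch_density y T (r - \<tau>))"
proof (cases T)
  case (Lf x)
  then show ?thesis using assms by auto
next
  case (Br2 a c)
  then have "(\<lambda>\<tau>. exp (- rate * \<tau>) * branch_density y T (r - \<tau>)) = (\<lambda>\<tau>.
      exp (- rate * \<tau>) * (s * shape_prob a (r - \<tau>) * shape_prob c (r - \<tau>)) * leaf_weight y T)"
    by (simp add: fun_eq_iff typed_prob_def mult_ac)
  then show ?thesis using Br2 by (simp add: typed_prob_def shape_prob_simps)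
next
  case (Br3 a c d)
  then have "(\<lambda>\<tau>. exp (- rate * \<tau>) * branch_density y T (r - \<tau>)) = (\<lambda>\<tau>. exp (- rate * \<tau>) *
      (\<gamma> * shape_prob a (r - \<tau>) * shape_prob c (r - \<tau>) * shape_prob d (r - \<tau>)) * leaf_weight y T)"
    by (simp add: fun_eq_iff typed_prob_def mult_ac)
  then show ?thesis using Br3 by (simp add: typed_prob_def shape_prob_simps)
next
  case (Mk a)
  then have "(\<lambda>\<tau>. exp (- rate * \<tau>) * branch_density y T (r - \<tau>)) =
      (\<lambda>\<tau>. exp (- rate * \<tau>) * (u * shape_prob a (r - \<tau>)) * leaf_weight y T)"
    by (simp add: fun_eq_iff typed_prob_def mult_ac)
  then show ?thesis using Mk by (simp add: typed_prob_def shape_prob_simps)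
qed

definition level_mass :: "real \<Rightarrow> (bool asg \<Rightarrow> bool) \<Rightarrow> nat \<Rightarrow> real \<Rightarrow> real" where
  "level_mass y \<phi> n r = (\<Sum>T\<in>asg_level n. of_bool (\<phi> T) * typed_prob y T r)"

abbreviation total_mass :: "real \<Rightarrow> nat \<Rightarrow> real \<Rightarrow> real" where
  "total_mass y \<equiv> level_mass y (\<lambda>_. True)"

abbreviation type1_mass :: "real \<Rightarrow> nat \<Rightarrow> real \<Rightarrow> real" where
  "type1_mass y \<equiv> level_mass y vtype"

abbreviation anc1_mass :: "real \<Rightarrow> nat \<Rightarrow> real \<Rightarrow> real" where
  "anc1_mass y \<equiv> level_mass y anc_type"

lemma continuous_on_level_mass: "continuous_on {0..b} (level_mass y \<phi> n)"
  unfolding level_mass_def by (intro continuous_intros continuous_on_typed_prob)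

lemma continuous_on_level_mass_reflect: "continuous_on {0..t} (\<lambda>\<tau>. level_mass y \<phi> n (t - \<tau>))"
  by (rule continuous_on_reflect_Icc_0[OF continuous_on_level_mass])

lemma level_mass_nonneg: "0 \<le> y \<Longrightarrow> y \<le> 1 \<Longrightarrow> 0 \<le> t \<Longrightarrow> 0 \<le> level_mass y \<phi> n t"
  unfolding level_mass_def by (intro sum_nonneg mult_nonneg_nonneg typed_prob_nonneg) auto

lemma level_mass_0:
  "level_mass y \<phi> 0 t = exp (- rate * t) * (of_bool (\<phi> (Lf True)) * y + of_bool (\<phi> (Lf False)) * (1 - y))"
  by (simp add: level_mass_def typed_prob_def shape_prob_simps algebra_simps)

lemma sum_typed_prob_inner:
  "(\<Sum>T\<in>asg_level (Suc n) - {Lf True, Lf False}. of_bool (\<phi> T) * typed_prob y T r) =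
     integral {0..r} (\<lambda>\<tau>. exp (- rate * \<tau>) *
       (\<Sum>T\<in>asg_level (Suc n). of_bool (\<phi> T) * branch_density y T (r - \<tau>)))"
proof -
  let ?N = "asg_level (Suc n) - {Lf True, Lf False}"
  let ?g = "\<lambda>T \<tau>. of_bool (\<phi> T) * (exp (- rate * \<tau>) * branch_density y T (r - \<tau>))"
  have integrable: "?g T integrable_on {0..r}" for T
    by (intro integrable_continuous_interval continuous_intros
        continuous_on_reflect_Icc_0[OF continuous_on_branch_density])
  have "of_bool (\<phi> T) * typed_prob y T r = integral {0..r} (?g T)" if "T \<in> ?N" for T
  proof -
    have "T \<noteq> Lf x" for x using that by (cases x) auto
    then have "typed_prob y T r = integral {0..r} (\<lambda>\<tau>. exp (- rate * \<tau>) * branch_density y T (r - \<tau>))"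
      by (rule typed_prob_first_event)
    then show ?thesis by (simp only: Henstock_Kurzweil_Integration.integral_mult_right)
  qed
  then have "(\<Sum>T\<in>?N. of_bool (\<phi> T) * typed_prob y T r) = (\<Sum>T\<in>?N. integral {0..r} (?g T))"
    by (rule sum.cong[OF refl])
  also have "\<dots> = integral {0..r} (\<lambda>\<tau>. \<Sum>T\<in>?N. ?g T \<tau>)"
    by (rule integral_sum[OF finite_Diff[OF finite_asg_level] integrable, symmetric])
  also have "(\<lambda>\<tau>. \<Sum>T\<in>?N. ?g T \<tau>) = (\<lambda>\<tau>. \<Sum>T\<in>asg_level (Suc n). ?g T \<tau>)"
    by (intro ext sum.mono_neutral_left finite_asg_level) auto
  finally show ?thesis by (simp add: sum_distrib_left mult.left_commute)
qed

lemma level_mass_Suc: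
  "level_mass y \<phi> (Suc n) r =
     exp (- rate * r) * (of_bool (\<phi> (Lf True)) * y + of_bool (\<phi> (Lf False)) * (1 - y))
     + integral {0..r} (\<lambda>\<tau>. exp (- rate * \<tau>) *
         (\<Sum>T\<in>asg_level (Suc n). of_bool (\<phi> T) * branch_density y T (r - \<tau>)))"
proof -
  let ?f = "\<lambda>T. of_bool (\<phi> T) * typed_prob y T r"
  have "level_mass y \<phi> (Suc n) r = sum ?f (asg_level (Suc n) - {Lf True, Lf False}) + sum ?f {Lf True, Lf False}"
    unfolding level_mass_def by (rule sum.subset_diff[OF leaves_in_asg_level finite_asg_level])
  moreover have "sum ?f {Lf True, Lf False} =
      exp (- rate * r) * (of_bool (\<phi> (Lf True)) * y + of_bool (\<phi> (Lf False)) * (1 - y))"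
    by (simp add: typed_prob_def shape_prob_simps algebra_simps)
  ultimately show ?thesis by (simp only: sum_typed_prob_inner add.commute)
qed

lemma sum_branch_density:
  "(\<Sum>T\<in>asg_level (Suc n). of_bool (\<phi> T) * branch_density y T t) =
     s * (\<Sum>a\<in>asg_level n. \<Sum>b\<in>asg_level n. of_bool (\<phi> (Br2 a b)) * (typed_prob y a t * typed_prob y b t))
   + \<gamma> * (\<Sum>a\<in>asg_level n. \<Sum>b\<in>asg_level n. \<Sum>c\<in>asg_level n.
          of_bool (\<phi> (Br3 a b c)) * (typed_prob y a t * typed_prob y b t * typed_prob y c t))
   + u * (\<Sum>a\<in>asg_level n. of_bool (\<phi> (Mk a)) * typed_prob y a t)"
  unfolding sum_asg_level_Suc by (simp add: sum_distrib_left mult_ac)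

lemma level_mass_and:
  "(\<Sum>a\<in>asg_level n. \<Sum>b\<in>asg_level n. of_bool (\<phi> a \<and> \<psi> b) * (typed_prob y a t * typed_prob y b t))
     = level_mass y \<phi> n t * level_mass y \<psi> n t"
  by (simp add: level_mass_def sum_product of_bool_conj mult_ac)

lemma level_mass_or:
  "(\<Sum>b\<in>asg_level n. \<Sum>c\<in>asg_level n. of_bool (\<psi> b \<or> \<psi> c) * (typed_prob y b t * typed_prob y c t))
     = level_mass y \<psi> n t * (2 * total_mass y n t - level_mass y \<psi> n t)"
proof -
  let ?W = "\<lambda>T. typed_prob y T t"
  have compl: "level_mass y (\<lambda>T. \<not> \<psi> T) n t = total_mass y n t - level_mass y \<psi> n t"
  proof -
    have "level_mass y (\<lambda>T. \<not> \<psi> T) n t = (\<Sum>T\<in>asg_level n. ?W T - of_bool (\<psi> T) * ?W T)"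
      unfolding level_mass_def by (intro sum.cong refl) simp
    then show ?thesis by (simp add: level_mass_def sum_subtractf)
  qed
  have "(\<Sum>b\<in>asg_level n. \<Sum>c\<in>asg_level n. of_bool (\<psi> b \<or> \<psi> c) * (?W b * ?W c))
      = (\<Sum>b\<in>asg_level n. \<Sum>c\<in>asg_level n. of_bool (True \<and> True) * (?W b * ?W c)
          - of_bool (\<not> \<psi> b \<and> \<not> \<psi> c) * (?W b * ?W c))"
    by (intro sum.cong refl) auto
  also have "\<dots> = (total_mass y n t)\<^sup>2 - (level_mass y (\<lambda>T. \<not> \<psi> T) n t)\<^sup>2"
    by (simp only: sum_subtractf level_mass_and power2_eq_square)
  finally show ?thesis unfolding compl by (simp add: power2_eq_square algebra_simps)
qed

lemma level_mass_and_or: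
  "(\<Sum>a\<in>asg_level n. \<Sum>b\<in>asg_level n. \<Sum>c\<in>asg_level n. of_bool (\<phi> a \<and> (\<psi> b \<or> \<psi> c)) *
      (typed_prob y a t * typed_prob y b t * typed_prob y c t))
     = level_mass y \<phi> n t * (level_mass y \<psi> n t * (2 * total_mass y n t - level_mass y \<psi> n t))"
proof -
  let ?W = "\<lambda>T. typed_prob y T t"
  let ?or = "\<lambda>b c. of_bool (\<psi> b \<or> \<psi> c) * (?W b * ?W c)"
  have "(\<Sum>a\<in>asg_level n. \<Sum>b\<in>asg_level n. \<Sum>c\<in>asg_level n. of_bool (\<phi> a \<and> (\<psi> b \<or> \<psi> c)) *
      (?W a * ?W b * ?W c))
    = (\<Sum>a\<in>asg_level n. \<Sum>b\<in>asg_level n. \<Sum>c\<in>asg_level n. (of_bool (\<phi> a) * ?W a) * ?or b c)"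
    by (intro sum.cong refl) (simp add: of_bool_conj mult_ac)
  also have "\<dots> = (\<Sum>a\<in>asg_level n. (of_bool (\<phi> a) * ?W a) *
      (\<Sum>b\<in>asg_level n. \<Sum>c\<in>asg_level n. ?or b c))"
    by (simp only: sum_distrib_left)
  also have "\<dots> = level_mass y \<phi> n t * (\<Sum>b\<in>asg_level n. \<Sum>c\<in>asg_level n. ?or b c)"
    by (simp only: level_mass_def sum_distrib_right)
  finally show ?thesis by (simp only: level_mass_or)
qed

lemma level_mass_Suc_compositional:
  assumes "\<And>a b. \<phi> (Br2 a b) = (\<phi> a \<and> \<psi> b)"
    and "\<And>a b c. \<phi> (Br3 a b c) = (\<phi> a \<and> (\<psi> b \<or> \<psi> c))"
    and "\<And>a. \<phi> (Mk a) = \<theta> a"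
  shows "level_mass y \<phi> (Suc n) t =
     exp (- rate * t) * (of_bool (\<phi> (Lf True)) * y + of_bool (\<phi> (Lf False)) * (1 - y))
     + integral {0..t} (\<lambda>\<tau>. exp (- rate * \<tau>) *
         (s * level_mass y \<phi> n (t - \<tau>) * level_mass y \<psi> n (t - \<tau>)
          + \<gamma> * level_mass y \<phi> n (t - \<tau>) * (level_mass y \<psi> n (t - \<tau>) *
               (2 * total_mass y n (t - \<tau>) - level_mass y \<psi> n (t - \<tau>)))
          + u * level_mass y \<theta> n (t - \<tau>)))"
proof -
  have "(\<Sum>T\<in>asg_level (Suc n). of_bool (\<phi> T) * branch_density y T r) =
      s * level_mass y \<phi> n r * level_mass y \<psi> n r
      + \<gamma> * level_mass y \<phi> n r * (level_mass y \<psi> n r * (2 * total_mass y n r - level_mass y \<psi> n r))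
      + u * level_mass y \<theta> n r" for r
    unfolding sum_branch_density assms level_mass_and level_mass_and_or
    by (simp add: level_mass_def mult_ac)
  then show ?thesis by (simp add: level_mass_Suc)
qed

lemma total_mass_Suc:
  "total_mass y (Suc n) t = exp (- rate * t) + integral {0..t} (\<lambda>\<tau>. exp (- rate * \<tau>) *
     (s * (total_mass y n (t - \<tau>))\<^sup>2 + \<gamma> * (total_mass y n (t - \<tau>)) ^ 3 + u * total_mass y n (t - \<tau>)))"
  using level_mass_Suc_compositional[of "\<lambda>_. True" "\<lambda>_. True" "\<lambda>_. True" y n t]
  by (simp add: power2_eq_square power3_eq_cube algebra_simps)

lemma type1_mass_Suc:
  "type1_mass y (Suc n) t = exp (- rate * t) * y + integral {0..t} (\<lambda>\<tau>. exp (- rate * \<tau>) *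
     (s * (type1_mass y n (t - \<tau>))\<^sup>2
      + \<gamma> * (type1_mass y n (t - \<tau>))\<^sup>2 * (2 * total_mass y n (t - \<tau>) - type1_mass y n (t - \<tau>))
      + u * total_mass y n (t - \<tau>)))"
  using level_mass_Suc_compositional[of vtype vtype "\<lambda>_. True" y n t]
  by (simp add: power2_eq_square mult_ac)

lemma anc1_mass_Suc:
  "anc1_mass y (Suc n) t = exp (- rate * t) * y + integral {0..t} (\<lambda>\<tau>. exp (- rate * \<tau>) *
     (s * anc1_mass y n (t - \<tau>) * type1_mass y n (t - \<tau>)
      + \<gamma> * anc1_mass y n (t - \<tau>) * (type1_mass y n (t - \<tau>) *
           (2 * total_mass y n (t - \<tau>) - type1_mass y n (t - \<tau>)))
      + u * anc1_mass y n (t - \<tau>)))"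
  using level_mass_Suc_compositional[of anc_type vtype anc_type, OF anc_type_Br2 anc_type_Br3]
  by simp

lemma level_mass_le_total_mass:
  assumes "0 \<le> y" "y \<le> 1" "0 \<le> t"
  shows "level_mass y \<phi> n t \<le> total_mass y n t"
  unfolding level_mass_def using typed_prob_nonneg[OF assms]
  by (intro sum_mono) (simp add: mult_left_le_one_le)

lemma total_mass_le_1:
  assumes "0 \<le> y" "y \<le> 1"
  shows "0 \<le> t \<Longrightarrow> total_mass y n t \<le> 1"
proof (induction n arbitrary: t)
  case 0
  then show ?case using rate_pos by (simp add: level_mass_0)
next
  case (Suc n)
  let ?M = "\<lambda>\<tau>. total_mass y n (t - \<tau>)"
  have "integral {0..t} (\<lambda>\<tau>. exp (- rate * \<tau>) * (s * (?M \<tau>)\<^sup>2 + \<gamma> * (?M \<tau>) ^ 3 + u * ?M \<tau>))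
        \<le> integral {0..t} (\<lambda>\<tau>. exp (- rate * \<tau>) * rate)"
  proof (rule integral_mono_continuous_on)
    fix \<tau> assume "\<tau> \<in> {0..t}"
    then have M: "0 \<le> ?M \<tau>" "?M \<tau> \<le> 1" using Suc.IH[of "t - \<tau>"] level_mass_nonneg[OF assms] by auto
    have "s * (?M \<tau>)\<^sup>2 \<le> s" using M s_pos by (intro mult_left_le power_le_one) auto
    moreover have "\<gamma> * (?M \<tau>) ^ 3 \<le> \<gamma>" using M \<gamma>_nonneg by (intro mult_left_le power_le_one) auto
    moreover have "u * ?M \<tau> \<le> u" using M u_pos by (intro mult_left_le) auto
    ultimately show "exp (- rate * \<tau>) * (s * (?M \<tau>)\<^sup>2 + \<gamma> * (?M \<tau>) ^ 3 + u * ?M \<tau>) \<le> exp (- rate * \<tau>) * rate"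
      by (intro mult_left_mono) (auto simp: rate_def)
  qed (intro continuous_intros continuous_on_level_mass_reflect)+
  then show ?case using integral_exp_rate[OF Suc.prems] by (simp add: total_mass_Suc)
qed

lemma rate_minus_total_mass_integrand:
  assumes "0 \<le> M" "M \<le> 1"
  shows "0 \<le> rate - (s * M\<^sup>2 + \<gamma> * M ^ 3 + u * M)"
    and "rate - (s * M\<^sup>2 + \<gamma> * M ^ 3 + u * M) \<le> (2 * s + 3 * \<gamma> + u) * (1 - M)"
proof -
  define K where "K = s * (1 + M) + \<gamma> * (1 + M + M\<^sup>2) + u"
  have factor: "rate - (s * M\<^sup>2 + \<gamma> * M ^ 3 + u * M) = (1 - M) * K"
    by (simp add: K_def rate_def algebra_simps power2_eq_square power3_eq_cube)
  have "0 \<le> K" using assms s_pos \<gamma>_nonneg u_pos by (simp add: K_def)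
  then show "0 \<le> rate - (s * M\<^sup>2 + \<gamma> * M ^ 3 + u * M)" using assms by (simp add: factor)
  have "s * (1 + M) \<le> s * 2" using assms s_pos by (intro mult_left_mono) auto
  moreover have "\<gamma> * (1 + M + M\<^sup>2) \<le> \<gamma> * 3"
    using assms \<gamma>_nonneg power_le_one[of M 2] by (intro mult_left_mono) auto
  ultimately have "K \<le> 2 * s + 3 * \<gamma> + u" by (simp add: K_def)
  then have "(1 - M) * K \<le> (1 - M) * (2 * s + 3 * \<gamma> + u)" using assms by (intro mult_left_mono) auto
  then show "rate - (s * M\<^sup>2 + \<gamma> * M ^ 3 + u * M) \<le> (2 * s + 3 * \<gamma> + u) * (1 - M)"
    unfolding factor by (simp add: mult.commute)
qed

text \<open>1 - total_mass y n t is the probability that a_t has height above n.\<close>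
lemma one_minus_total_mass_le:
  assumes y: "0 \<le> y" "y \<le> 1"
  shows "0 \<le> t \<Longrightarrow> 1 - total_mass y n t \<le> ((2 * s + 3 * \<gamma> + u) * t) ^ n / fact n"
proof (induction n arbitrary: t)
  case 0
  then show ?case by (simp add: level_mass_0)
next
  case (Suc n)
  define C where "C = 2 * s + 3 * \<gamma> + u"
  have C: "0 \<le> C" using s_pos \<gamma>_nonneg u_pos by (simp add: C_def)
  let ?M = "\<lambda>\<tau>. total_mass y n (t - \<tau>)"
  let ?F = "\<lambda>\<tau>. s * (?M \<tau>)\<^sup>2 + \<gamma> * (?M \<tau>) ^ 3 + u * ?M \<tau>"
  have int: "(\<lambda>\<tau>. exp (- rate * \<tau>) * rate) integrable_on {0..t}"
    "(\<lambda>\<tau>. exp (- rate * \<tau>) * ?F \<tau>) integrable_on {0..t}"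
    by (intro integrable_continuous_interval continuous_intros continuous_on_level_mass_reflect)+
  have "1 - total_mass y (Suc n) t
      = integral {0..t} (\<lambda>\<tau>. exp (- rate * \<tau>) * rate) - integral {0..t} (\<lambda>\<tau>. exp (- rate * \<tau>) * ?F \<tau>)"
    using integral_exp_rate[OF Suc.prems] by (simp add: total_mass_Suc)
  also have "\<dots> = integral {0..t} (\<lambda>\<tau>. exp (- rate * \<tau>) * (rate - ?F \<tau>))"
    using integral_diff[OF int] by (simp add: algebra_simps)
  also have "\<dots> \<le> integral {0..t} (\<lambda>\<tau>. C * (C * (t - \<tau>)) ^ n / fact n)"
  proof (rule integral_mono_continuous_on)
    fix \<tau> assume \<tau>: "\<tau> \<in> {0..t}"
    then have M: "0 \<le> ?M \<tau>" "?M \<tau> \<le> 1"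
      using total_mass_le_1[OF y, of "t - \<tau>" n] level_mass_nonneg[OF y] by auto
    have "exp (- rate * \<tau>) * (rate - ?F \<tau>) \<le> rate - ?F \<tau>"
      using \<tau> rate_pos rate_minus_total_mass_integrand(1)[OF M] by (intro mult_left_le_one_le) auto
    also have "\<dots> \<le> C * (1 - ?M \<tau>)" using rate_minus_total_mass_integrand(2)[OF M] by (simp add: C_def)
    also have "\<dots> \<le> C * ((C * (t - \<tau>)) ^ n / fact n)"
      using Suc.IH[of "t - \<tau>"] \<tau> C by (intro mult_left_mono) (auto simp: C_def)
    finally show "exp (- rate * \<tau>) * (rate - ?F \<tau>) \<le> C * (C * (t - \<tau>)) ^ n / fact n" by simp
  qed (auto intro!: continuous_intros continuous_on_level_mass_reflect)
  also have "\<dots> = (C * t) ^ Suc n / fact (Suc n)" by (rule integral_power_fact_Icc_0[OF Suc.prems])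
  finally show ?case by (simp add: C_def)
qed

lemma total_mass_tendsto_1:
  assumes "0 \<le> y" "y \<le> 1" "0 \<le> t"
  shows "(\<lambda>n. total_mass y n t) \<longlonglongrightarrow> 1"
proof (rule tendsto_sandwich)
  let ?x = "(2 * s + 3 * \<gamma> + u) * t"
  have "(\<lambda>n. inverse (fact n) * ?x ^ n) \<longlonglongrightarrow> 0"
    by (rule summable_LIMSEQ_zero[OF summable_exp])
  then have "(\<lambda>n. 1 - ?x ^ n / fact n) \<longlonglongrightarrow> 1 - 0"
    by (intro tendsto_diff tendsto_const) (simp add: divide_inverse mult.commute)
  then show "(\<lambda>n. 1 - ?x ^ n / fact n) \<longlonglongrightarrow> 1" by simp
  show "\<forall>\<^sub>F n in sequentially. 1 - ?x ^ n / fact n \<le> total_mass y n t"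
    using one_minus_total_mass_le[OF assms(1,2,3)] by (simp add: algebra_simps)
  show "\<forall>\<^sub>F n in sequentially. total_mass y n t \<le> 1"
    using total_mass_le_1[OF assms] by simp
qed simp

lemma sum_le_anc1_mass:
  assumes "0 \<le> y" "y \<le> 1" "0 \<le> r" "finite F" "F \<subseteq> {T. anc_type T}"
  shows "\<exists>n. sum (\<lambda>T. typed_prob y T r) F \<le> anc1_mass y n r"
proof -
  obtain n where n: "F \<subseteq> asg_level n" using finite_subset_asg_level[OF assms(4)] by blast
  have "sum (\<lambda>T. typed_prob y T r) F = (\<Sum>T\<in>F. of_bool (anc_type T) * typed_prob y T r)"
    using assms(5) by (intro sum.cong) auto
  also have "\<dots> \<le> anc1_mass y n r"
    unfolding level_mass_def using n typed_prob_nonneg[OF assms(1-3)]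
    by (intro sum_mono2 finite_asg_level) auto
  finally show ?thesis by blast
qed

lemma asg_g_le:
  assumes y: "0 \<le> y" "y \<le> 1" and r: "0 \<le> r" and bound: "\<And>n. anc1_mass y n r \<le> B"
  shows "(\<lambda>T. typed_prob y T r) summable_on {T. anc_type T}" and "asg_g s \<gamma> u r y \<le> B"
proof -
  have finite_sums: "sum (\<lambda>T. typed_prob y T r) F \<le> B" if "finite F" "F \<subseteq> {T. anc_type T}" for F
    using sum_le_anc1_mass[OF y r that] bound by (meson order_trans)
  show summable: "(\<lambda>T. typed_prob y T r) summable_on {T. anc_type T}"
    using typed_prob_nonneg[OF y r] finite_sums
    by (intro nonneg_bdd_above_summable_on bdd_aboveI) auto
  show "asg_g s \<gamma> u r y \<le> B"
    unfolding asg_g_eq_infsum using finite_sums by (rule infsum_le_finite_sums[OF summable])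
qed

lemma anc1_mass_le_asg_g:
  assumes "0 \<le> y" "y \<le> 1" "0 \<le> r" "(\<lambda>T. typed_prob y T r) summable_on {T. anc_type T}"
  shows "anc1_mass y n r \<le> asg_g s \<gamma> u r y"
proof -
  have "anc1_mass y n r = sum (\<lambda>T. typed_prob y T r) (asg_level n \<inter> {T. anc_type T})"
    unfolding level_mass_def sum.inter_restrict[OF finite_asg_level] by (intro sum.cong refl) auto
  also have "\<dots> \<le> asg_g s \<gamma> u r y"
    unfolding asg_g_eq_infsum using typed_prob_nonneg[OF assms(1-3)]
    by (intro finite_sum_le_infsum[OF assms(4)]) (auto simp: finite_asg_level)
  finally show ?thesis .
qed

text \<open>If all leaves have type 1, every vertex has type 1, so only the total mass matters.\<close>
lemma asg_g_1:
  assumes "0 \<le> r"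
  shows "asg_g s \<gamma> u r 1 = 1"
proof (rule antisym)
  have anc_total: "anc1_mass 1 n r = total_mass 1 n r" for n
    unfolding level_mass_def
    by (intro sum.cong refl) (auto simp: typed_prob_def leaf_weight_1_if_not_anc_type)
  have bound: "anc1_mass 1 n r \<le> 1" for n
    using total_mass_le_1[of 1 r n] assms by (simp add: anc_total)
  show "asg_g s \<gamma> u r 1 \<le> 1" by (rule asg_g_le(2)[OF _ _ assms bound]) auto
  have "\<And>n. total_mass 1 n r \<le> asg_g s \<gamma> u r 1"
    using anc1_mass_le_asg_g[OF _ _ assms asg_g_le(1)[OF _ _ assms bound]] by (simp add: anc_total)
  then show "1 \<le> asg_g s \<gamma> u r 1"
    using total_mass_tendsto_1[of 1 r] assms by (intro LIMSEQ_le_const2) auto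
qed

lemma asg_g_1_tendsto: "((\<lambda>r. asg_g s \<gamma> u r 1) \<longlongrightarrow> 1) at_top"
proof (rule tendsto_eventually)
  show "\<forall>\<^sub>F r in at_top. asg_g s \<gamma> u r 1 = 1"
    using eventually_ge_at_top[of 0] by eventually_elim (rule asg_g_1)
qed

end

section \<open>Decay of the ancestral mass at an equilibrium\<close>

lemma power2_mult_two_minus_mono:
  fixes x z :: real
  assumes "0 \<le> x" "x \<le> z" "z \<le> 1"
  shows "x\<^sup>2 * (2 - x) \<le> z\<^sup>2 * (2 - z)"
proof -
  have "z\<^sup>2 * (2 - z) - x\<^sup>2 * (2 - x) = (z - x) * (2 * (z + x) - (z\<^sup>2 + z * x + x\<^sup>2))"
    by (simp add: algebra_simps power2_eq_square)
  moreover have "z\<^sup>2 + z * x + x\<^sup>2 \<le> 2 * (z + x)"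
  proof -
    have "z\<^sup>2 \<le> z" "x\<^sup>2 \<le> x" using assms by (simp_all add: power2_eq_square mult_left_le_one_le)
    moreover have "z * x \<le> z" using assms by (intro mult_left_le) auto
    ultimately show ?thesis using assms by simp
  qed
  then have "0 \<le> (z - x) * (2 * (z + x) - (z\<^sup>2 + z * x + x\<^sup>2))"
    using assms by (intro mult_nonneg_nonneg) auto
  ultimately show ?thesis by linarith
qed

lemma mult_two_minus_mono:
  fixes x z :: real
  assumes "0 \<le> x" "x \<le> z" "z \<le> 1"
  shows "x * (2 - x) \<le> z * (2 - z)"
proof -
  have "z * (2 - z) - x * (2 - x) = (z - x) * (2 - z - x)" by (simp add: algebra_simps)
  moreover have "0 \<le> (z - x) * (2 - z - x)" using assms by (intro mult_nonneg_nonneg) auto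
  ultimately show ?thesis by linarith
qed

locale asg_equilibrium = asg_rates +
  fixes L :: real
  assumes L_nonneg: "0 \<le> L" and L_less_1: "L < 1" and drift_L: "drift s \<gamma> u L = 0"
begin

text \<open>In the recursion for anc1_mass, bounding type1_mass by L and total_mass by 1 shows that
  ancestral mass is produced at rate at most rate - decay, so it decays like exp (- decay * t).\<close>
definition decay :: real where
  "decay = rate - (s * L + \<gamma> * (L * (2 - L)) + u)"

lemma decay_eq: "decay = (1 - L) * (s + \<gamma> * (1 - L))"
  by (simp add: decay_def rate_def algebra_simps)

lemma decay_pos: "0 < decay"
  unfolding decay_eq using s_pos \<gamma>_nonneg L_less_1 by (simp add: add_pos_nonneg)

lemma decay_less_rate: "0 < rate - decay"
proof -
  have "0 \<le> s * L" "0 \<le> \<gamma> * (L * (2 - L))" using s_pos \<gamma>_nonneg L_nonneg L_less_1 by simp_all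
  then show ?thesis unfolding decay_def using u_pos by linarith
qed

lemma equilibrium_eq: "s * L\<^sup>2 + \<gamma> * L\<^sup>2 * (2 - L) + u = rate * L"
  using drift_L by (simp add: drift_def rate_def algebra_simps power2_eq_square)

lemma L_bounds: "0 \<le> L" "L \<le> 1"
  using L_nonneg L_less_1 by auto

lemma type1_mass_le: "0 \<le> t \<Longrightarrow> type1_mass L n t \<le> L"
proof (induction n arbitrary: t)
  case 0
  then show ?case using rate_pos L_nonneg by (simp add: level_mass_0 mult_left_le_one_le)
next
  case (Suc n)
  let ?M = "\<lambda>\<tau>. total_mass L n (t - \<tau>)"
  let ?V = "\<lambda>\<tau>. type1_mass L n (t - \<tau>)"
  have "integral {0..t} (\<lambda>\<tau>. exp (- rate * \<tau>) * (s * (?V \<tau>)\<^sup>2 + \<gamma> * (?V \<tau>)\<^sup>2 * (2 * ?M \<tau> - ?V \<tau>) + u * ?M \<tau>))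
        \<le> integral {0..t} (\<lambda>\<tau>. exp (- rate * \<tau>) * rate * L)"
  proof (rule integral_mono_continuous_on)
    fix \<tau> assume "\<tau> \<in> {0..t}"
    then have \<tau>: "0 \<le> t - \<tau>" by auto
    have V: "0 \<le> ?V \<tau>" "?V \<tau> \<le> L" using level_mass_nonneg[OF L_bounds \<tau>] Suc.IH[OF \<tau>] by auto
    have M: "?M \<tau> \<le> 1" using total_mass_le_1[OF L_bounds \<tau>] .
    have "s * (?V \<tau>)\<^sup>2 \<le> s * L\<^sup>2" using V s_pos by (intro mult_left_mono power_mono) auto
    moreover have "(?V \<tau>)\<^sup>2 * (2 * ?M \<tau> - ?V \<tau>) \<le> L\<^sup>2 * (2 - L)"
    proof -
      have "(?V \<tau>)\<^sup>2 * (2 * ?M \<tau> - ?V \<tau>) \<le> (?V \<tau>)\<^sup>2 * (2 - ?V \<tau>)"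
        using M by (intro mult_left_mono) auto
      also have "\<dots> \<le> L\<^sup>2 * (2 - L)" using V L_bounds by (intro power2_mult_two_minus_mono)
      finally show ?thesis .
    qed
    then have "\<gamma> * (?V \<tau>)\<^sup>2 * (2 * ?M \<tau> - ?V \<tau>) \<le> \<gamma> * L\<^sup>2 * (2 - L)"
      using \<gamma>_nonneg by (simp add: mult.assoc mult_left_mono)
    moreover have "u * ?M \<tau> \<le> u" using M u_pos by simp
    ultimately show "exp (- rate * \<tau>) * (s * (?V \<tau>)\<^sup>2 + \<gamma> * (?V \<tau>)\<^sup>2 * (2 * ?M \<tau> - ?V \<tau>) + u * ?M \<tau>)
        \<le> exp (- rate * \<tau>) * rate * L"
      using equilibrium_eq by (simp add: mult.assoc mult_left_mono)
  qed (intro continuous_intros continuous_on_level_mass_reflect)+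
  moreover have "integral {0..t} (\<lambda>\<tau>. exp (- rate * \<tau>) * rate * L) = (1 - exp (- rate * t)) * L"
    using integral_exp_rate[OF Suc.prems] by simp
  ultimately show ?case by (simp add: type1_mass_Suc algebra_simps)
qed

lemma anc1_production_le:
  assumes "0 \<le> t"
  shows "s * anc1_mass L n t * type1_mass L n t
      + \<gamma> * anc1_mass L n t * (type1_mass L n t * (2 * total_mass L n t - type1_mass L n t))
      + u * anc1_mass L n t \<le> (rate - decay) * anc1_mass L n t"
proof -
  let ?M = "total_mass L n t" and ?V = "type1_mass L n t" and ?A = "anc1_mass L n t"
  have V: "0 \<le> ?V" "?V \<le> L" and M: "?M \<le> 1" and A: "0 \<le> ?A"
    using level_mass_nonneg[OF L_bounds assms] type1_mass_le[OF assms] total_mass_le_1[OF L_bounds assms]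
    by auto
  have "?V * (2 * ?M - ?V) \<le> ?V * (2 - ?V)" using V M by (intro mult_left_mono) auto
  also have "\<dots> \<le> L * (2 - L)" using V L_bounds by (intro mult_two_minus_mono) auto
  finally have "\<gamma> * (?V * (2 * ?M - ?V)) \<le> \<gamma> * (L * (2 - L))"
    using \<gamma>_nonneg by (rule mult_left_mono)
  moreover have "s * ?V \<le> s * L" using V s_pos by simp
  ultimately have "s * ?V + \<gamma> * (?V * (2 * ?M - ?V)) + u \<le> rate - decay"
    unfolding decay_def by linarith
  then have "?A * (s * ?V + \<gamma> * (?V * (2 * ?M - ?V)) + u) \<le> ?A * (rate - decay)"
    using A by (rule mult_left_mono)
  then show ?thesis by (simp add: algebra_simps)
qed

lemma anc1_mass_le_exp: "0 \<le> t \<Longrightarrow> anc1_mass L n t \<le> L * exp (- decay * t)"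
proof (induction n arbitrary: t)
  case 0
  have "exp (- rate * t) \<le> exp (- decay * t)"
    using decay_less_rate 0 by (simp add: mult_right_mono)
  then show ?case using L_nonneg by (simp add: level_mass_0 mult_left_mono mult.commute)
next
  case (Suc n)
  let ?M = "\<lambda>\<tau>. total_mass L n (t - \<tau>)"
  let ?V = "\<lambda>\<tau>. type1_mass L n (t - \<tau>)"
  let ?A = "\<lambda>\<tau>. anc1_mass L n (t - \<tau>)"
  let ?bound = "\<lambda>\<tau>. (rate - decay) * L * exp (- decay * t) * exp (- (rate - decay) * \<tau>)"
  have "integral {0..t} (\<lambda>\<tau>. exp (- rate * \<tau>) *
      (s * ?A \<tau> * ?V \<tau> + \<gamma> * ?A \<tau> * (?V \<tau> * (2 * ?M \<tau> - ?V \<tau>)) + u * ?A \<tau>))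
      \<le> integral {0..t} ?bound"
  proof (rule integral_mono_continuous_on)
    fix \<tau> assume "\<tau> \<in> {0..t}"
    then have \<tau>: "0 \<le> t - \<tau>" by auto
    have "exp (- rate * \<tau>) * (s * ?A \<tau> * ?V \<tau> + \<gamma> * ?A \<tau> * (?V \<tau> * (2 * ?M \<tau> - ?V \<tau>)) + u * ?A \<tau>)
        \<le> exp (- rate * \<tau>) * ((rate - decay) * ?A \<tau>)"
      using anc1_production_le[OF \<tau>] by (intro mult_left_mono) auto
    also have "\<dots> \<le> exp (- rate * \<tau>) * ((rate - decay) * (L * exp (- decay * (t - \<tau>))))"
      using Suc.IH[OF \<tau>] decay_less_rate by (intro mult_left_mono) auto
    also have "\<dots> = ?bound \<tau>"
      by (simp add: exp_add[symmetric] algebra_simps)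
    finally show "exp (- rate * \<tau>) *
        (s * ?A \<tau> * ?V \<tau> + \<gamma> * ?A \<tau> * (?V \<tau> * (2 * ?M \<tau> - ?V \<tau>)) + u * ?A \<tau>) \<le> ?bound \<tau>" .
  qed (intro continuous_intros continuous_on_level_mass_reflect)+
  moreover have "integral {0..t} ?bound = L * exp (- decay * t) * (1 - exp (- (rate - decay) * t))"
    using integral_exp_neg_Icc_0[OF decay_less_rate Suc.prems] decay_less_rate by simp
  moreover have "exp (- decay * t) * exp (- (rate - decay) * t) = exp (- rate * t)"
    by (simp add: exp_add[symmetric] algebra_simps)
  ultimately show ?case by (simp add: anc1_mass_Suc algebra_simps)
qed

lemma asg_g_tendsto_0: "((\<lambda>r. asg_g s \<gamma> u r L) \<longlongrightarrow> 0) at_top"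
proof (rule tendsto_sandwich)
  show "\<forall>\<^sub>F r in at_top. 0 \<le> asg_g s \<gamma> u r L"
    using eventually_ge_at_top[of 0]
    by eventually_elim (use typed_prob_nonneg[OF L_bounds] in \<open>auto simp: asg_g_eq_infsum intro!: infsum_nonneg\<close>)
  show "\<forall>\<^sub>F r in at_top. asg_g s \<gamma> u r L \<le> L * exp (- decay * r)"
    using eventually_ge_at_top[of 0] by eventually_elim (rule asg_g_le(2)[OF L_bounds _ anc1_mass_le_exp])
  have "LIM r at_top. - decay * r :> at_bot"
    using decay_pos by (intro filterlim_tendsto_neg_mult_at_bot[OF tendsto_const _ filterlim_ident]) auto
  then have "((\<lambda>r. exp (- decay * r)) \<longlongrightarrow> 0) at_top"
    by (rule filterlim_compose[OF exp_at_bot])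
  then show "((\<lambda>r. L * exp (- decay * r)) \<longlongrightarrow> 0) at_top"
    using tendsto_mult_left[of _ 0 at_top L] by simp
qed simp

end

lemma (in asg_rates) asg_g_tendsto_0_at_equilibrium:
  assumes "0 \<le> L" "L < 1" "drift s \<gamma> u L = 0"
  shows "((\<lambda>r. asg_g s \<gamma> u r L) \<longlongrightarrow> 0) at_top"
proof -
  interpret asg_equilibrium s \<gamma> u L using assms by unfold_locales
  show ?thesis by (rule asg_g_tendsto_0)
qed

section \<open>Autonomous scalar ODEs\<close>

locale autonomous_ode =
  fixes Y f :: "real \<Rightarrow> real" and slope :: "real \<Rightarrow> real \<Rightarrow> real"
  assumes continuous_f: "continuous_on UNIV f"
    and f_diff_eq: "\<And>m x. f x - f m = (x - m) * slope m x"
    and continuous_slope: "\<And>m. continuous_on UNIV (slope m)"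
    and has_derivative_Y: "\<And>t. 0 \<le> t \<Longrightarrow> (Y has_real_derivative f (Y t)) (at t within {0..})"
begin

lemma continuous_on_Y:
  assumes "0 \<le> a"
  shows "continuous_on {a..b} Y"
proof (rule DERIV_continuous_on)
  fix x assume "x \<in> {a..b}"
  then show "(Y has_real_derivative f (Y x)) (at x within {a..b})"
    using has_derivative_Y[of x] assms by (rule_tac has_field_derivative_subset) auto
qed

lemma has_derivative_Y_at: "0 < t \<Longrightarrow> (Y has_real_derivative f (Y t)) (at t)"
proof -
  assume t: "0 < t"
  have "(Y has_real_derivative f (Y t)) (at t within {0..t + 1})"
    using has_derivative_Y[of t] t by (rule_tac has_field_derivative_subset) auto
  then show ?thesis using at_within_Icc_at[of 0 t "t + 1"] t by simp
qed

lemma mean_value: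
  assumes "0 \<le> a" "a < b"
  shows "\<exists>z. a < z \<and> z < b \<and> Y b - Y a = (b - a) * f (Y z)"
proof -
  have "Y differentiable (at x)" if "a < x" for x
    using has_derivative_Y_at[of x] that assms unfolding real_differentiable_def by auto
  then obtain l z where z: "a < z" "z < b" "DERIV Y z :> l" "Y b - Y a = (b - a) * l"
    using MVT[OF assms(2) continuous_on_Y[OF assms(1)]] by blast
  then have "l = f (Y z)" using DERIV_unique[OF z(3) has_derivative_Y_at] assms by auto
  then show ?thesis using z by auto
qed

text \<open>This replaces a uniqueness theorem for the ODE: with K the integral of slope m along Y,
  (Y - m) exp (- K) has derivative f m exp (- K).\<close>
lemma integrating_factor:
  assumes "0 \<le> T"
  shows "\<exists>E>0. \<exists>D\<ge>0. (Y T - m) * E = (Y 0 - m) + D * f m"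
proof (cases "T = 0")
  case True
  then show ?thesis by (intro exI[of _ 1] exI[of _ 0]) auto
next
  case False
  then have T: "0 < T" using assms by auto
  define K where "K t = integral {0..t} (\<lambda>\<tau>. slope m (Y \<tau>))" for t
  define F where "F t = (Y t - m) * exp (- K t)" for t
  have K_deriv: "(K has_real_derivative slope m (Y x)) (at x within {0..T})" if "x \<in> {0..T}" for x
    unfolding K_def
    by (rule integral_has_real_derivative[OF continuous_on_compose2[OF continuous_slope continuous_on_Y] that])
       auto
  have F_cont: "continuous_on {0..T} F"
    unfolding F_def using K_deriv
    by (intro continuous_intros continuous_on_Y DERIV_continuous_on[of _ K]) auto
  have F_deriv: "(F has_real_derivative f m * exp (- K x)) (at x)" if "0 < x" "x < T" for x
  proof -
    have "(K has_real_derivative slope m (Y x)) (at x)"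
      using K_deriv[of x] that at_within_Icc_at[of 0 x T] by simp
    then have "(F has_real_derivative f (Y x) * exp (- K x) + exp (- K x) * (- slope m (Y x)) * (Y x - m)) (at x)"
      unfolding F_def by (auto intro!: derivative_eq_intros has_derivative_Y_at that)
    moreover have "f (Y x) = f m + (Y x - m) * slope m (Y x)" using f_diff_eq[of "Y x" m] by simp
    ultimately show ?thesis by (simp add: algebra_simps)
  qed
  obtain l z where z: "0 < z" "z < T" "DERIV F z :> l" "F T - F 0 = (T - 0) * l"
    using MVT[OF T F_cont] F_deriv unfolding real_differentiable_def by blast
  have "l = f m * exp (- K z)" using DERIV_unique[OF z(3) F_deriv[OF z(1,2)]] .
  then have "(Y T - m) * exp (- K T) = (Y 0 - m) + (T * exp (- K z)) * f m"
    using z(4) by (simp add: F_def K_def algebra_simps)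
  then show ?thesis using T by (intro exI[of _ "exp (- K T)"] conjI exI[of _ "T * exp (- K z)"]) auto
qed

lemma sgn_equilibrium_invariant:
  assumes "f m = 0" "0 \<le> T"
  shows "sgn (Y T - m) = sgn (Y 0 - m)"
proof -
  obtain E D where "E > 0" "(Y T - m) * E = Y 0 - m"
    using integrating_factor[OF assms(2), of m] assms(1) by auto
  then show ?thesis by (metis sgn_mult sgn_pos mult.right_neutral)
qed

lemma equilibrium_barrier:
  assumes "f m = 0" "0 \<le> T"
  shows "Y 0 < m \<Longrightarrow> Y T < m" and "Y 0 = m \<Longrightarrow> Y T = m" and "m < Y 0 \<Longrightarrow> m < Y T"
  using sgn_equilibrium_invariant[OF assms] by (auto simp: sgn_if split: if_splits)

lemma stays_above:
  assumes "0 \<le> f m" "m \<le> Y 0" "0 \<le> T"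
  shows "m \<le> Y T"
proof -
  obtain E D where "E > 0" "D \<ge> 0" "(Y T - m) * E = (Y 0 - m) + D * f m"
    using integrating_factor[OF assms(3)] by blast
  then have "0 \<le> (Y T - m) * E" using assms by simp
  with \<open>E > 0\<close> show ?thesis by (simp add: zero_le_mult_iff)
qed

lemma tendsto_equilibrium_const:
  assumes "f e = 0" "Y 0 = e"
  shows "(Y \<longlongrightarrow> e) at_top"
proof (rule tendsto_eventually)
  show "\<forall>\<^sub>F t in at_top. Y t = e"
    using eventually_ge_at_top[of 0] by eventually_elim (use equilibrium_barrier(2)[OF assms(1)] assms(2) in auto)
qed

lemma tendsto_increasing_to_equilibrium:
  assumes fe: "f e = 0" and below: "Y 0 < e" and pos: "\<And>x. Y 0 \<le> x \<Longrightarrow> x < e \<Longrightarrow> 0 < f x"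
  shows "(Y \<longlongrightarrow> e) at_top"
proof -
  have range: "Y 0 \<le> Y t" "Y t < e" if "0 \<le> t" for t
    using stays_above[of "Y 0" t] pos[of "Y 0"] equilibrium_barrier(1)[OF fe that below] below that by auto
  have mono: "Y a \<le> Y b" if ab: "0 \<le> a" "a \<le> b" for a b
  proof (cases "a = b")
    case False
    then obtain z where z: "a < z" "z < b" "Y b - Y a = (b - a) * f (Y z)"
      using mean_value[of a b] ab by auto
    then have "0 < f (Y z)" using pos range[of z] ab by auto
    then have "0 \<le> (b - a) * f (Y z)" using ab by simp
    then show ?thesis using z(3) by simp
  qed simp
  have reach: "\<exists>t\<ge>0. a < Y t" if a: "a < e" for a
  proof (rule ccontr)
    assume "\<not> ?thesis"
    then have le: "\<And>t. 0 \<le> t \<Longrightarrow> Y t \<le> a" by (auto simp: not_less)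
    obtain x0 where x0: "x0 \<in> {Y 0..a}" "\<forall>x\<in>{Y 0..a}. f x0 \<le> f x"
      using continuous_attains_inf[of "{Y 0..a}" f] le[of 0] continuous_on_subset[OF continuous_f] by auto
    define \<delta> where "\<delta> = f x0"
    have \<delta>: "0 < \<delta>" unfolding \<delta>_def using x0(1) a by (intro pos) auto
    define T where "T = (e - Y 0) / \<delta> + 1"
    have "0 < (e - Y 0) / \<delta>" using below \<delta> by simp
    then have T: "0 < T" by (simp add: T_def)
    obtain z where z: "0 < z" "Y T - Y 0 = T * f (Y z)" using mean_value[of 0 T] T by auto
    have "\<delta> \<le> f (Y z)" using x0 range(1)[of z] le[of z] z by (auto simp: \<delta>_def)
    then have "T * \<delta> \<le> Y T - Y 0" using z T by (simp add: mult_left_mono)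
    moreover have "T * \<delta> = (e - Y 0) + \<delta>" using \<delta> by (simp add: T_def field_simps)
    ultimately show False using \<delta> range(2)[of T] T by simp
  qed
  show ?thesis
  proof (rule order_tendstoI)
    fix a assume "a < e"
    then obtain t0 where t0: "0 \<le> t0" "a < Y t0" using reach by blast
    show "\<forall>\<^sub>F t in at_top. a < Y t"
      using eventually_ge_at_top[of t0] by eventually_elim (use mono t0 in force)
  next
    fix a assume "e < a"
    show "\<forall>\<^sub>F t in at_top. Y t < a"
      using eventually_ge_at_top[of 0] by eventually_elim (use range \<open>e < a\<close> in force)
  qed
qed

lemma reflect: "autonomous_ode (\<lambda>t. - Y t) (\<lambda>x. - f (- x)) (\<lambda>m x. slope (- m) (- x))"
proof
  show "continuous_on UNIV (\<lambda>x. - f (- x))"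
    by (intro continuous_intros continuous_on_compose2[OF continuous_f]) auto
  show "- f (- x) - - f (- m) = (x - m) * slope (- m) (- x)" for m x
    using f_diff_eq[of "- x" "- m"] by (simp add: algebra_simps)
  show "continuous_on UNIV (\<lambda>x. slope (- m) (- x))" for m
    by (intro continuous_intros continuous_on_compose2[OF continuous_slope]) auto
  show "((\<lambda>t. - Y t) has_real_derivative - f (- (- Y t))) (at t within {0..})" if "0 \<le> t" for t
    using DERIV_minus[OF has_derivative_Y[OF that]] by simp
qed

lemma tendsto_decreasing_to_equilibrium:
  assumes "f e = 0" "e < Y 0" "\<And>x. e < x \<Longrightarrow> x \<le> Y 0 \<Longrightarrow> f x < 0"
  shows "(Y \<longlongrightarrow> e) at_top"
proof -
  have "((\<lambda>t. - Y t) \<longlongrightarrow> - e) at_top"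
    using assms by (intro autonomous_ode.tendsto_increasing_to_equilibrium[OF reflect]) force+
  then show ?thesis using tendsto_minus[of "\<lambda>t. - Y t" "- e"] by simp
qed

lemma tendsto_stable_equilibrium:
  assumes "f e = 0" "a \<le> Y 0" "Y 0 \<le> b"
    and "\<And>x. a \<le> x \<Longrightarrow> x < e \<Longrightarrow> 0 < f x" and "\<And>x. e < x \<Longrightarrow> x \<le> b \<Longrightarrow> f x < 0"
  shows "(Y \<longlongrightarrow> e) at_top"
  using assms tendsto_equilibrium_const[of e] tendsto_increasing_to_equilibrium[of e]
    tendsto_decreasing_to_equilibrium[of e]
  by (cases "Y 0" e rule: linorder_cases) auto

end

section \<open>Sign pattern of the drift\<close>

definition drift_slope :: "real \<Rightarrow> real \<Rightarrow> real \<Rightarrow> real \<Rightarrow> real \<Rightarrow> real" where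
  "drift_slope s \<gamma> u m x = - \<gamma> * (x\<^sup>2 + x * m + m\<^sup>2) + (s + 2 * \<gamma>) * (x + m) - (s + \<gamma> + u)"

lemma drift_diff_eq: "drift s \<gamma> u x - drift s \<gamma> u m = (x - m) * drift_slope s \<gamma> u m x"
  by (simp add: drift_def drift_slope_def algebra_simps power2_eq_square)

lemma continuous_on_drift: "continuous_on UNIV (drift s \<gamma> u)"
  unfolding drift_def by (intro continuous_intros)

lemma continuous_on_drift_slope: "continuous_on UNIV (drift_slope s \<gamma> u m)"
  unfolding drift_slope_def by (intro continuous_intros)

lemma drift_eq_quadratic: "drift s \<gamma> u x = (1 - x) * (\<gamma> * x\<^sup>2 - (s + \<gamma>) * x + u)"
  by (simp add: drift_def algebra_simps power2_eq_square)

lemma drift_at_1: "drift s \<gamma> u 1 = 0"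
  by (simp add: drift_def)

definition ybar2 :: "real \<Rightarrow> real \<Rightarrow> real \<Rightarrow> real" where
  "ybar2 s \<gamma> u = (1 + s / \<gamma> - sqrt (Defs.sigma s \<gamma> u)) / 2"

lemma ybar_vieta:
  fixes s \<gamma> u :: real
  assumes "0 < \<gamma>" "0 \<le> Defs.sigma s \<gamma> u"
  shows "ybar2 s \<gamma> u \<le> ybar3 s \<gamma> u"
    and "ybar2 s \<gamma> u + ybar3 s \<gamma> u = 1 + s / \<gamma>"
    and "ybar2 s \<gamma> u * ybar3 s \<gamma> u = u / \<gamma>"
proof -
  define r where "r = sqrt (Defs.sigma s \<gamma> u)"
  have r2: "r\<^sup>2 = (1 + s / \<gamma>)\<^sup>2 - 4 * u / \<gamma>" using assms(2) by (simp add: r_def sigma_def)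
  have y: "ybar2 s \<gamma> u = (1 + s / \<gamma> - r) / 2" "ybar3 s \<gamma> u = (1 + s / \<gamma> + r) / 2"
    by (simp_all add: ybar2_def ybar3_def r_def)
  show "ybar2 s \<gamma> u \<le> ybar3 s \<gamma> u" using assms(2) by (simp add: y r_def)
  show "ybar2 s \<gamma> u + ybar3 s \<gamma> u = 1 + s / \<gamma>" by (simp add: y field_simps)
  have "ybar2 s \<gamma> u * ybar3 s \<gamma> u = ((1 + s / \<gamma>)\<^sup>2 - r\<^sup>2) / 4"
    by (simp add: y field_simps power2_eq_square)
  then show "ybar2 s \<gamma> u * ybar3 s \<gamma> u = u / \<gamma>" by (simp add: r2)
qed

lemma quadratic_eq_roots:
  assumes "0 < \<gamma>" "0 \<le> Defs.sigma s \<gamma> u"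
  shows "\<gamma> * x\<^sup>2 - (s + \<gamma>) * x + u = \<gamma> * ((x - ybar2 s \<gamma> u) * (x - ybar3 s \<gamma> u))"
proof -
  have "\<gamma> * ((x - ybar2 s \<gamma> u) * (x - ybar3 s \<gamma> u))
      = \<gamma> * x\<^sup>2 - \<gamma> * (ybar2 s \<gamma> u + ybar3 s \<gamma> u) * x + \<gamma> * (ybar2 s \<gamma> u * ybar3 s \<gamma> u)"
    by (simp add: algebra_simps power2_eq_square)
  also have "\<dots> = \<gamma> * x\<^sup>2 - (s + \<gamma>) * x + u"
    unfolding ybar_vieta(2,3)[OF assms] using assms(1) by (simp add: field_simps)
  finally show ?thesis by simp
qed

lemma drift_eq_roots:
  assumes "0 < \<gamma>" "0 \<le> Defs.sigma s \<gamma> u"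
  shows "drift s \<gamma> u x = (1 - x) * \<gamma> * ((x - ybar2 s \<gamma> u) * (x - ybar3 s \<gamma> u))"
  by (simp add: drift_eq_quadratic quadratic_eq_roots[OF assms])

lemma sigma_nonneg_iff:
  assumes "0 < \<gamma>"
  shows "0 \<le> Defs.sigma s \<gamma> u \<longleftrightarrow> 4 * \<gamma> * u \<le> (s + \<gamma>)\<^sup>2"
proof -
  have "Defs.sigma s \<gamma> u = ((s + \<gamma>)\<^sup>2 - 4 * \<gamma> * u) / \<gamma>\<^sup>2"
    using assms by (simp add: sigma_def field_simps power2_eq_square)
  then show ?thesis using assms by (auto simp: zero_le_divide_iff)
qed

lemma ereal_le_ucheck_iff:
  assumes "0 < \<gamma>"
  shows "ereal u \<le> ucheck s \<gamma> \<longleftrightarrow> 4 * \<gamma> * u \<le> (s + \<gamma>)\<^sup>2"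
  using assms by (simp add: ucheck_def field_simps power2_eq_square)

lemma ybar_bounds_if_u_le_s:
  assumes \<gamma>: "0 < \<gamma>" and u: "0 < u" and c: "u < s \<or> (u = s \<and> s < \<gamma>)"
  shows "0 \<le> Defs.sigma s \<gamma> u" and "0 < ybar2 s \<gamma> u" "ybar2 s \<gamma> u < 1" "1 \<le> ybar3 s \<gamma> u"
proof -
  have "0 \<le> (s - \<gamma>)\<^sup>2 + 4 * \<gamma> * (s - u)" using c \<gamma> by auto
  moreover have "(s + \<gamma>)\<^sup>2 - 4 * \<gamma> * u = (s - \<gamma>)\<^sup>2 + 4 * \<gamma> * (s - u)"
    by (simp add: algebra_simps power2_eq_square)
  ultimately show \<sigma>: "0 \<le> Defs.sigma s \<gamma> u" using sigma_nonneg_iff[OF \<gamma>] by simp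
  define y2 y3 where "y2 = ybar2 s \<gamma> u" and "y3 = ybar3 s \<gamma> u"
  note V = ybar_vieta[OF \<gamma> \<sigma>, folded y2_def y3_def]
  have at_1: "u - s = \<gamma> * ((1 - y2) * (1 - y3))"
    using quadratic_eq_roots[OF \<gamma> \<sigma>, of 1] by (simp add: y2_def y3_def)
  have prod_nonpos: "(1 - y2) * (1 - y3) \<le> 0"
  proof (rule ccontr)
    assume "\<not> (1 - y2) * (1 - y3) \<le> 0"
    then have "0 < \<gamma> * ((1 - y2) * (1 - y3))" using \<gamma> by simp
    then show False using at_1 c by linarith
  qed
  show y3: "1 \<le> y3"
  proof (rule ccontr)
    assume "\<not> 1 \<le> y3"
    then have "0 < (1 - y2) * (1 - y3)" using V(1) by (intro mult_pos_pos) auto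
    with prod_nonpos show False by simp
  qed
  show "y2 < 1"
  proof (rule ccontr)
    assume "\<not> y2 < 1"
    then have "0 \<le> (1 - y2) * (1 - y3)" using y3 by (intro mult_nonpos_nonpos) auto
    then have "u = s" using at_1 c prod_nonpos by auto
    then have "y2 + y3 < 2" using V(2) c \<gamma> by simp
    then show False using \<open>\<not> y2 < 1\<close> y3 by simp
  qed
  have "0 < y2 * y3" using V(3) u \<gamma> by simp
  then show "0 < y2" using y3 by (metis zero_less_mult_pos2 zero_less_one order_less_le_trans)
qed

lemma drift_stable_root_below_1:
  assumes s: "0 < s" and \<gamma>: "0 \<le> \<gamma>" and u: "0 < u" and c: "u < s \<or> (u = s \<and> s < \<gamma>)"
  obtains e where "0 < e" "e < 1" "drift s \<gamma> u e = 0"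
    "\<And>x. 0 \<le> x \<Longrightarrow> x < e \<Longrightarrow> 0 < drift s \<gamma> u x" "\<And>x. e < x \<Longrightarrow> x < 1 \<Longrightarrow> drift s \<gamma> u x < 0"
proof (cases "\<gamma> = 0")
  case True
  then have us: "u < s" using c s by auto
  have D: "drift s \<gamma> u x = (1 - x) * (u - s * x)" for x using True by (simp add: drift_eq_quadratic)
  show ?thesis
  proof (rule that[of "u / s"])
    show "0 < u / s" "u / s < 1" "drift s \<gamma> u (u / s) = 0" using s u us by (auto simp: D)
    show "0 < drift s \<gamma> u x" if "0 \<le> x" "x < u / s" for x
    proof -
      have "s * x < u" using that s by (simp add: field_simps)
      then have "s * x < s * 1" using us by linarith
      then have "x < 1" using s by (simp only: mult_less_cancel_left_pos)
      with \<open>s * x < u\<close> show ?thesis by (simp add: D)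
    qed
    show "drift s \<gamma> u x < 0" if "u / s < x" "x < 1" for x
    proof -
      have "u < s * x" using that s by (simp add: field_simps)
      with that show ?thesis by (simp add: D mult_pos_neg)
    qed
  qed
next
  case False
  then have \<gamma>0: "0 < \<gamma>" using \<gamma> by simp
  note B = ybar_bounds_if_u_le_s[OF \<gamma>0 u c]
  have D: "drift s \<gamma> u x = (1 - x) * \<gamma> * ((x - ybar2 s \<gamma> u) * (x - ybar3 s \<gamma> u))" for x
    by (rule drift_eq_roots[OF \<gamma>0 B(1)])
  show ?thesis
  proof (rule that[of "ybar2 s \<gamma> u"])
    show "0 < ybar2 s \<gamma> u" "ybar2 s \<gamma> u < 1" "drift s \<gamma> u (ybar2 s \<gamma> u) = 0" using B by (auto simp: D)
    show "0 < drift s \<gamma> u x" if "0 \<le> x" "x < ybar2 s \<gamma> u" for x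
      unfolding D using that B \<gamma>0 by (intro mult_pos_pos mult_neg_neg) auto
    show "drift s \<gamma> u x < 0" if "ybar2 s \<gamma> u < x" "x < 1" for x
      unfolding D using that B \<gamma>0 by (intro mult_pos_neg mult_pos_pos) auto
  qed
qed

lemma drift_pos_below_1:
  assumes s: "0 < s" and \<gamma>: "0 \<le> \<gamma>" and u: "0 < u"
    and c: "ereal u > ucheck s \<gamma> \<or> (s \<ge> \<gamma> \<and> s \<le> u \<and> ereal u \<le> ucheck s \<gamma>)"
    and x: "0 \<le> x" "x < 1"
  shows "0 < drift s \<gamma> u x"
proof -
  have "0 < \<gamma> * x\<^sup>2 - (s + \<gamma>) * x + u"
  proof (cases "ereal u > ucheck s \<gamma>")
    case True
    then have \<gamma>0: "0 < \<gamma>" using \<gamma> by (cases "\<gamma> = 0") (auto simp: ucheck_def)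
    have "\<not> ereal u \<le> ucheck s \<gamma>" using True by simp
    then have "(s + \<gamma>)\<^sup>2 < 4 * \<gamma> * u" using ereal_le_ucheck_iff[OF \<gamma>0] by simp
    moreover have "4 * \<gamma> * (\<gamma> * x\<^sup>2 - (s + \<gamma>) * x + u) = (2 * \<gamma> * x - (s + \<gamma>))\<^sup>2 + (4 * \<gamma> * u - (s + \<gamma>)\<^sup>2)"
      by (simp add: algebra_simps power2_eq_square)
    moreover have "0 \<le> (2 * \<gamma> * x - (s + \<gamma>))\<^sup>2" by simp
    ultimately have "0 < 4 * \<gamma> * (\<gamma> * x\<^sup>2 - (s + \<gamma>) * x + u)" by linarith
    then show ?thesis using \<gamma>0 by (metis zero_less_mult_pos mult_pos_pos zero_less_numeral)
  next
    case False
    then have "\<gamma> \<le> s" "s \<le> u" using c by auto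
    have "\<gamma> * x\<^sup>2 - (s + \<gamma>) * x + u = (1 - x) * ((s - \<gamma>) + \<gamma> * (1 - x)) + (u - s)"
      by (simp add: algebra_simps power2_eq_square)
    moreover have "0 < (s - \<gamma>) + \<gamma> * (1 - x)"
    proof (cases "\<gamma> = 0")
      case False
      then have "0 < \<gamma> * (1 - x)" using \<gamma> x by simp
      then show ?thesis using \<open>\<gamma> \<le> s\<close> by simp
    qed (use s in simp)
    then have "0 < (1 - x) * ((s - \<gamma>) + \<gamma> * (1 - x))" using x by simp
    ultimately show ?thesis using \<open>s \<le> u\<close> by linarith
  qed
  then show ?thesis using x by (simp add: drift_eq_quadratic)
qed

lemma ybar_bounds_if_s_less_u:
  assumes s: "0 < s" and u: "0 < u" and c: "s < \<gamma>" "s < u" "ereal u \<le> ucheck s \<gamma>"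
  shows "0 \<le> Defs.sigma s \<gamma> u" and "0 < ybar2 s \<gamma> u" "ybar2 s \<gamma> u \<le> ybar3 s \<gamma> u" "ybar3 s \<gamma> u < 1"
proof -
  have \<gamma>: "0 < \<gamma>" using c s by simp
  show \<sigma>: "0 \<le> Defs.sigma s \<gamma> u" using c(3) sigma_nonneg_iff[OF \<gamma>] ereal_le_ucheck_iff[OF \<gamma>] by simp
  define y2 y3 where "y2 = ybar2 s \<gamma> u" and "y3 = ybar3 s \<gamma> u"
  note V = ybar_vieta[OF \<gamma> \<sigma>, folded y2_def y3_def]
  show "y2 \<le> y3" by (rule V(1))
  have "u - s = \<gamma> * ((1 - y2) * (1 - y3))"
    using quadratic_eq_roots[OF \<gamma> \<sigma>, of 1] by (simp add: y2_def y3_def)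
  then have "0 < \<gamma> * ((1 - y2) * (1 - y3))" using c(2) by linarith
  then have pos_at_1: "0 < (1 - y2) * (1 - y3)" using \<gamma> by (rule zero_less_mult_pos)
  have "y2 + y3 < 2" using V(2) c(1) \<gamma> by simp
  show y3: "y3 < 1"
  proof (rule ccontr)
    assume "\<not> y3 < 1"
    then have "1 - y2 < 0" using pos_at_1 by (simp add: zero_less_mult_iff)
    then show False using \<open>y2 + y3 < 2\<close> \<open>\<not> y3 < 1\<close> by simp
  qed
  have "0 < s / \<gamma>" using s \<gamma> by simp
  then have "0 < y3" using V(1,2) by linarith
  moreover have "0 < y2 * y3" using V(3) u \<gamma> by simp
  ultimately show "0 < y2" by (metis zero_less_mult_pos2)
qed

lemma drift_bistable:
  assumes s: "0 < s" and u: "0 < u" and c: "s < \<gamma>" "s < u" "ereal u \<le> ucheck s \<gamma>"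
  obtains y2 where "0 < y2" "y2 \<le> ybar3 s \<gamma> u" "ybar3 s \<gamma> u < 1"
    "drift s \<gamma> u y2 = 0" "drift s \<gamma> u (ybar3 s \<gamma> u) = 0"
    "\<And>x. 0 \<le> x \<Longrightarrow> x < y2 \<Longrightarrow> 0 < drift s \<gamma> u x"
    "\<And>x. y2 < x \<Longrightarrow> x < ybar3 s \<gamma> u \<Longrightarrow> drift s \<gamma> u x < 0"
    "\<And>x. ybar3 s \<gamma> u < x \<Longrightarrow> x < 1 \<Longrightarrow> 0 < drift s \<gamma> u x"
proof (rule that[of "ybar2 s \<gamma> u"])
  have \<gamma>: "0 < \<gamma>" using c s by simp
  note B = ybar_bounds_if_s_less_u[OF assms]
  have D: "drift s \<gamma> u x = (1 - x) * \<gamma> * ((x - ybar2 s \<gamma> u) * (x - ybar3 s \<gamma> u))" for x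
    by (rule drift_eq_roots[OF \<gamma> B(1)])
  show "0 < ybar2 s \<gamma> u" "ybar2 s \<gamma> u \<le> ybar3 s \<gamma> u" "ybar3 s \<gamma> u < 1"
    "drift s \<gamma> u (ybar2 s \<gamma> u) = 0" "drift s \<gamma> u (ybar3 s \<gamma> u) = 0"
    using B by (auto simp: D)
  show "0 < drift s \<gamma> u x" if "0 \<le> x" "x < ybar2 s \<gamma> u" for x
    unfolding D using that B \<gamma> by (intro mult_pos_pos mult_neg_neg) auto
  show "drift s \<gamma> u x < 0" if "ybar2 s \<gamma> u < x" "x < ybar3 s \<gamma> u" for x
    unfolding D using that B \<gamma> by (intro mult_pos_neg mult_pos_pos) auto
  show "0 < drift s \<gamma> u x" if "ybar3 s \<gamma> u < x" "x < 1" for x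
    unfolding D using that B \<gamma> by (intro mult_pos_pos) auto
qed

section \<open>Limits of the ODE and of the ASG\<close>

locale drift_ode = asg_rates +
  fixes Y :: "real \<Rightarrow> real"
  assumes Y_0: "0 \<le> Y 0" "Y 0 \<le> 1"
    and Y_solves: "\<And>t. 0 \<le> t \<Longrightarrow> (Y has_real_derivative drift s \<gamma> u (Y t)) (at t within {0..})"
begin

sublocale autonomous_ode Y "drift s \<gamma> u" "drift_slope s \<gamma> u"
  by unfold_locales (auto intro: continuous_on_drift continuous_on_drift_slope drift_diff_eq Y_solves)

lemma limit_from_1:
  assumes "Y 0 = 1"
  shows "\<exists>L. (Y \<longlongrightarrow> L) at_top \<and> ((\<lambda>r. asg_g s \<gamma> u r L) \<longlongrightarrow> 1) at_top"
  using tendsto_equilibrium_const[OF drift_at_1 assms] asg_g_1_tendsto by blast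

lemma limit_to_1:
  assumes "Y 0 < 1" and "\<And>x. Y 0 \<le> x \<Longrightarrow> x < 1 \<Longrightarrow> 0 < drift s \<gamma> u x"
  shows "\<exists>L. (Y \<longlongrightarrow> L) at_top \<and> ((\<lambda>r. asg_g s \<gamma> u r L) \<longlongrightarrow> 1) at_top"
  using tendsto_increasing_to_equilibrium[OF drift_at_1 assms] asg_g_1_tendsto by blast

lemma limit_to_equilibrium_below_1:
  assumes "(Y \<longlongrightarrow> L) at_top" "0 \<le> L" "L < 1" "drift s \<gamma> u L = 0"
  shows "\<exists>L. (Y \<longlongrightarrow> L) at_top \<and> ((\<lambda>r. asg_g s \<gamma> u r L) \<longlongrightarrow> 0) at_top"
  using assms asg_g_tendsto_0_at_equilibrium by blast

lemma limit_case_i: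
  assumes "Y 0 < 1" "u < s \<or> (u = s \<and> s < \<gamma>)"
  shows "\<exists>L. (Y \<longlongrightarrow> L) at_top \<and> ((\<lambda>r. asg_g s \<gamma> u r L) \<longlongrightarrow> 0) at_top"
proof -
  obtain e where e: "0 < e" "e < 1" "drift s \<gamma> u e = 0"
    "\<And>x. 0 \<le> x \<Longrightarrow> x < e \<Longrightarrow> 0 < drift s \<gamma> u x" "\<And>x. e < x \<Longrightarrow> x < 1 \<Longrightarrow> drift s \<gamma> u x < 0"
    using drift_stable_root_below_1[OF s_pos \<gamma>_nonneg u_pos assms(2)] by blast
  have "(Y \<longlongrightarrow> e) at_top"
    using e assms(1) Y_0 by (intro tendsto_stable_equilibrium[of e 0 "Y 0"]) auto
  then show ?thesis using e by (intro limit_to_equilibrium_below_1) auto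
qed

lemma limit_case_ii:
  assumes "Y 0 < 1" "ereal u > ucheck s \<gamma> \<or> (s \<ge> \<gamma> \<and> s \<le> u \<and> ereal u \<le> ucheck s \<gamma>)"
  shows "\<exists>L. (Y \<longlongrightarrow> L) at_top \<and> ((\<lambda>r. asg_g s \<gamma> u r L) \<longlongrightarrow> 1) at_top"
  using assms Y_0 by (intro limit_to_1 drift_pos_below_1[OF s_pos \<gamma>_nonneg u_pos]) auto

lemma limit_case_iii:
  assumes "Y 0 < 1" "s < \<gamma> \<and> s < u \<and> ereal u \<le> ucheck s \<gamma>"
  shows "\<exists>L. (Y \<longlongrightarrow> L) at_top \<and>
    ((\<lambda>r. asg_g s \<gamma> u r L) \<longlongrightarrow> (if Y 0 \<le> ybar3 s \<gamma> u then 0 else 1)) at_top"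
proof -
  let ?y3 = "ybar3 s \<gamma> u"
  obtain y2 where y: "0 < y2" "y2 \<le> ?y3" "?y3 < 1" "drift s \<gamma> u y2 = 0" "drift s \<gamma> u ?y3 = 0"
    "\<And>x. 0 \<le> x \<Longrightarrow> x < y2 \<Longrightarrow> 0 < drift s \<gamma> u x"
    "\<And>x. y2 < x \<Longrightarrow> x < ?y3 \<Longrightarrow> drift s \<gamma> u x < 0"
    "\<And>x. ?y3 < x \<Longrightarrow> x < 1 \<Longrightarrow> 0 < drift s \<gamma> u x"
    using drift_bistable[OF s_pos u_pos] assms(2) by blast
  consider "Y 0 < ?y3" | "Y 0 = ?y3" | "?y3 < Y 0" by linarith
  then show ?thesis
  proof cases
    case 1
    have "(Y \<longlongrightarrow> y2) at_top"
      using y 1 Y_0 by (intro tendsto_stable_equilibrium[of y2 0 "Y 0"]) auto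
    then show ?thesis using y 1 limit_to_equilibrium_below_1[of y2] by auto
  next
    case 2
    then show ?thesis using y tendsto_equilibrium_const[of ?y3] limit_to_equilibrium_below_1[of ?y3] by auto
  next
    case 3
    then show ?thesis using y assms(1) limit_to_1 by auto
  qed
qed

end

theorem corollary2p41:
  fixes s \<gamma> u :: real and y :: "real \<Rightarrow> real \<Rightarrow> real"
  assumes "s > 0" and "\<gamma> \<ge> 0" and "u > 0"
    and init: "\<And>y0. y0 \<in> {0..1} \<Longrightarrow> y y0 0 = y0"
    and ode: "\<And>y0 t. y0 \<in> {0..1} \<Longrightarrow> t \<ge> 0 \<Longrightarrow>
               (y y0 has_real_derivative drift s \<gamma> u (y y0 t)) (at t within {0..})"
  shows "(\<exists>L. (y 1 \<longlongrightarrow> L) at_top \<and> ((\<lambda>r. asg_g s \<gamma> u r L) \<longlongrightarrow> 1) at_top) \<and>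
    (\<forall>y0\<in>{0..<1}.
       ((u < s \<or> (u = s \<and> s < \<gamma>)) \<longrightarrow>
          (\<exists>L. (y y0 \<longlongrightarrow> L) at_top \<and> ((\<lambda>r. asg_g s \<gamma> u r L) \<longlongrightarrow> 0) at_top)) \<and>
       ((ereal u > ucheck s \<gamma> \<or> (s \<ge> \<gamma> \<and> s \<le> u \<and> ereal u \<le> ucheck s \<gamma>)) \<longrightarrow>
          (\<exists>L. (y y0 \<longlongrightarrow> L) at_top \<and> ((\<lambda>r. asg_g s \<gamma> u r L) \<longlongrightarrow> 1) at_top)) \<and>
       ((s < \<gamma> \<and> s < u \<and> ereal u \<le> ucheck s \<gamma>) \<longrightarrow>
          (\<exists>L. (y y0 \<longlongrightarrow> L) at_top \<and>
             ((\<lambda>r. asg_g s \<gamma> u r L) \<longlongrightarrow> (if y0 \<le> ybar3 s \<gamma> u then 0 else 1)) at_top)))"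
proof -
  have ode_y: "drift_ode s \<gamma> u (y y0)" if "y0 \<in> {0..1}" for y0
    using assms(1-3) init[OF that] ode[OF that] that by unfold_locales auto
  have start: "y0 \<in> {0..1}" "y y0 0 = y0" "y y0 0 < 1" if "y0 \<in> {0..<1}" for y0
    using init that by auto
  show ?thesis
  proof (intro conjI ballI impI)
    show "\<exists>L. (y 1 \<longlongrightarrow> L) at_top \<and> ((\<lambda>r. asg_g s \<gamma> u r L) \<longlongrightarrow> 1) at_top"
      using drift_ode.limit_from_1[OF ode_y] init by simp
  qed (use start drift_ode.limit_case_i[OF ode_y] drift_ode.limit_case_ii[OF ode_y]
         drift_ode.limit_case_iii[OF ode_y] in metis)+
qed

end
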